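(* Let $T$ be (the surface of) a regular tetrahedron with its intrinsic path metric. The space $T\times T$ cannot be partitioned as $E_1\sqcup E_2\sqcup E_3$ with a geodesic motion-planning rule on each $E_i$.
   Context: For a metric space $X$, let $P(X)$ denote the space of paths in $X$. A geodesic motion-planning rule (GMPR) on a subset $E\subseteq X\times X$ is a continuous function $\phi:E\to P(X)$ such that for every $(x_0,x_1)\in E$, $\phi(x_0,x_1)$ is a minimal (shortest) geodesic from $x_0$ to $x_1$. *)

theory Defs
  imports "HOL-Analysis.Analysis"
begin

definition path_len :: "('a \<Rightarrow> 'a \<Rightarrow> real) \<Rightarrow> (real \<Rightarrow> 'a) \<Rightarrow> ereal" where
  "path_len d g = (SUP ts \<in> {ts::real list. ts \<noteq> [] \<and> sorted ts \<and> hd ts = 0 \<and> last ts = 1}.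
      ereal (\<Sum>i<length ts - 1. d (g (ts ! i)) (g (ts ! Suc i))))"

definition mpath :: "'a set \<Rightarrow> ('a \<Rightarrow> 'a \<Rightarrow> real) \<Rightarrow> (real \<Rightarrow> 'a) \<Rightarrow> bool" where
  "mpath X d g \<longleftrightarrow> (\<forall>t\<in>{0..1}. g t \<in> X) \<and>
     (\<forall>t\<in>{0..1}. \<forall>e>0. \<exists>\<delta>>0. \<forall>s\<in>{0..1}. \<bar>s - t\<bar> < \<delta> \<longrightarrow> d (g s) (g t) < e)"

definition min_geodesic :: "'a set \<Rightarrow> ('a \<Rightarrow> 'a \<Rightarrow> real) \<Rightarrow> 'a \<Rightarrow> 'a \<Rightarrow> (real \<Rightarrow> 'a) \<Rightarrow> bool" where
  "min_geodesic X d x0 x1 g \<longleftrightarrow> mpath X d g \<and> g 0 = x0 \<and> g 1 = x1 \<and>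
     path_len d g = ereal (d x0 x1)"

text \<open>Geodesic motion-planning rule on E \<subseteq> X \<times> X: continuous for the max-metric on
  X \<times> X and the uniform (= compact-open) metric on the path space P(X).\<close>
definition gmpr :: "'a set \<Rightarrow> ('a \<Rightarrow> 'a \<Rightarrow> real) \<Rightarrow> ('a \<times> 'a) set \<Rightarrow> ('a \<times> 'a \<Rightarrow> real \<Rightarrow> 'a) \<Rightarrow> bool" where
  "gmpr X d E \<phi> \<longleftrightarrow> E \<subseteq> X \<times> X \<and>
     (\<forall>p\<in>E. min_geodesic X d (fst p) (snd p) (\<phi> p)) \<and>
     (\<forall>p\<in>E. \<forall>e>0. \<exists>\<delta>>0. \<forall>q\<in>E.
        max (d (fst p) (fst q)) (d (snd p) (snd q)) < \<delta> \<longrightarrow>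
        (\<forall>t\<in>{0..1}. d (\<phi> p t) (\<phi> q t) < e))"

definition tet_surface :: "(real^3) set" where
  "tet_surface = frontier (convex hull {vector [1,1,1], vector [1,-1,-1], vector [-1,1,-1], vector [-1,-1,1]})"

definition tet_dist :: "real^3 \<Rightarrow> real^3 \<Rightarrow> real" where
  "tet_dist x y = real_of_ereal (INF g \<in> {g. path g \<and> path_image g \<subseteq> tet_surface \<and>
      pathstart g = x \<and> pathfinish g = y}. path_len dist g)"

end

theory Submission
  imports Defs
begin

text \<open>
  Unfold the tetrahedron: the map \<open>tet_fold\<close> wraps the plane around the surface T, identifying
  points exactly when they differ by p \<mapsto> \<plusminus>p + 2(i, j), and it is an isometry on each lattice
  triangle for a suitable Euclidean norm \<open>hex_norm\<close>. Consequently the intrinsic distance from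
  fold a to fold b is the norm-distance from a to the nearest lift of b, and every shortest
  geodesic is the fold of a straight segment to a nearest lift; in particular it passes through
  the fold of the midpoint of that segment.

  For the pair (base_x, base_y) exactly four lifts of base_y are nearest to base_x, and the four
  midpoints are far apart on T. Near this pair the set of nearest lifts can be shrunk by one
  element with an arbitrarily small perturbation. A continuous geodesic rule on E that uses the
  k-th lift at some pair of E must use a k-th midpoint, hence keep k among the nearest lifts, at
  all nearby pairs of E. Starting from the base pair and each time dropping the lift used by the
  set that contains the current pair, one obtains four pairs that lie in four different sets.
\<close>

section \<open>The triangle wave\<close>

definition tri_wave :: "real \<Rightarrow> real" where
  "tri_wave t = 1 - 2 * \<bar>t - 2 * of_int \<lfloor>(t + 1) / 2\<rfloor>\<bar>"

lemma tri_wave_floor_bound: fixes t :: real shows "\<bar>t - 2 * of_int \<lfloor>(t + 1) / 2\<rfloor>\<bar> \<le> 1"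
proof -
  have "of_int \<lfloor>(t + 1) / 2\<rfloor> \<le> (t + 1) / 2" by (rule of_int_floor_le)
  moreover have "(t + 1) / 2 < of_int \<lfloor>(t + 1) / 2\<rfloor> + 1" by (rule real_of_int_floor_add_one_gt)
  ultimately show ?thesis by (simp add: abs_if field_simps)
qed

lemma tri_wave_eq:
  assumes "\<bar>t - 2 * of_int m\<bar> \<le> 1"
  shows "tri_wave t = 1 - 2 * \<bar>t - 2 * of_int m\<bar>"
proof -
  define n where "n = \<lfloor>(t + 1) / 2\<rfloor>"
  have n: "\<bar>t - 2 * of_int n\<bar> \<le> 1" unfolding n_def by (rule tri_wave_floor_bound)
  with assms have "\<bar>of_int m - of_int n\<bar> \<le> (1::real)" by (simp add: abs_if split: if_splits)
  hence "m = n \<or> m = n + 1 \<or> m = n - 1" by linarith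
  thus ?thesis
  proof (elim disjE)
    assume "m = n"
    thus ?thesis by (simp add: tri_wave_def n_def)
  next
    assume "m = n + 1"
    hence "\<bar>t - 2 * of_int n\<bar> = 1" "\<bar>t - 2 * of_int m\<bar> = 1"
      using assms n by (simp_all add: abs_if split: if_splits)
    thus ?thesis by (simp add: tri_wave_def n_def)
  next
    assume "m = n - 1"
    hence "\<bar>t - 2 * of_int n\<bar> = 1" "\<bar>t - 2 * of_int m\<bar> = 1"
      using assms n by (simp_all add: abs_if split: if_splits)
    thus ?thesis by (simp add: tri_wave_def n_def)
  qed
qed

lemma tri_wave_ex: "\<exists>m::int. \<bar>t - 2 * of_int m\<bar> \<le> 1 \<and> tri_wave t = 1 - 2 * \<bar>t - 2 * of_int m\<bar>"
  using tri_wave_floor_bound tri_wave_def by blast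

lemma tri_wave_ge: "1 - 2 * \<bar>t - 2 * of_int (m::int)\<bar> \<le> tri_wave t"
proof (cases "\<bar>t - 2 * of_int m\<bar> \<le> 1")
  case False
  with tri_wave_ex[of t] show ?thesis by fastforce
qed (simp add: tri_wave_eq)

lemma tri_wave_lipschitz: "\<bar>tri_wave s - tri_wave t\<bar> \<le> 2 * \<bar>s - t\<bar>"
proof -
  obtain m where m: "tri_wave t = 1 - 2 * \<bar>t - 2 * of_int m\<bar>" using tri_wave_ex by blast
  obtain n where n: "tri_wave s = 1 - 2 * \<bar>s - 2 * of_int n\<bar>" using tri_wave_ex by blast
  have "1 - 2 * \<bar>s - 2 * of_int m\<bar> \<le> tri_wave s" "1 - 2 * \<bar>t - 2 * of_int n\<bar> \<le> tri_wave t"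
    by (rule tri_wave_ge)+
  thus ?thesis using m n by (simp add: abs_if split: if_splits)
qed

lemma tri_wave_periodic: "tri_wave (t + 2 * of_int k) = tri_wave t"
proof -
  obtain m where m: "\<bar>t - 2 * of_int m\<bar> \<le> 1" "tri_wave t = 1 - 2 * \<bar>t - 2 * of_int m\<bar>"
    using tri_wave_ex by blast
  have "\<bar>(t + 2 * of_int k) - 2 * of_int (m + k)\<bar> \<le> 1" using m by (simp add: algebra_simps)
  from tri_wave_eq[OF this] show ?thesis using m by (simp add: algebra_simps)
qed

lemma tri_wave_minus: "tri_wave (- t) = tri_wave t"
proof -
  obtain m where m: "\<bar>t - 2 * of_int m\<bar> \<le> 1" "tri_wave t = 1 - 2 * \<bar>t - 2 * of_int m\<bar>"
    using tri_wave_ex by blast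
  have eq: "\<bar>- t - 2 * of_int (- m)\<bar> = \<bar>t - 2 * of_int m\<bar>" by linarith
  from tri_wave_eq[of "- t" "- m"] show ?thesis using m unfolding eq by simp
qed

lemma tri_wave_eqD:
  assumes "tri_wave s = tri_wave t"
  obtains e k where "e = 1 \<or> e = -1" "s = e * t + 2 * of_int (k::int)"
proof -
  obtain m where m: "\<bar>t - 2 * of_int m\<bar> \<le> 1" "tri_wave t = 1 - 2 * \<bar>t - 2 * of_int m\<bar>"
    using tri_wave_ex by blast
  obtain n where n: "\<bar>s - 2 * of_int n\<bar> \<le> 1" "tri_wave s = 1 - 2 * \<bar>s - 2 * of_int n\<bar>"
    using tri_wave_ex by blast
  have "\<bar>s - 2 * of_int n\<bar> = \<bar>t - 2 * of_int m\<bar>" using assms m n by simp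
  hence "s = 1 * t + 2 * of_int (n - m) \<or> s = (-1) * t + 2 * of_int (n + m)"
    by (simp add: abs_if split: if_splits)
  thus ?thesis using that by blast
qed

lemma tri_wave_01: "0 \<le> t \<Longrightarrow> t \<le> 1 \<Longrightarrow> tri_wave t = 1 - 2 * t"
  using tri_wave_eq[of t 0] by simp

lemma tri_wave_12: "1 \<le> t \<Longrightarrow> t \<le> 2 \<Longrightarrow> tri_wave t = 2 * t - 3"
  using tri_wave_eq[of t 1] by simp

lemma tri_wave_23: "2 \<le> t \<Longrightarrow> t \<le> 3 \<Longrightarrow> tri_wave t = 5 - 2 * t"
  using tri_wave_eq[of t 1] by simp

lemma tri_wave_m10: "-1 \<le> t \<Longrightarrow> t \<le> 0 \<Longrightarrow> tri_wave t = 1 + 2 * t"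
  using tri_wave_eq[of t 0] by simp


section \<open>The tetrahedron in barycentric coordinates\<close>

definition tet_vertex :: "nat \<Rightarrow> real^3" where
  "tet_vertex k = (if k = 1 then vector [1,1,1] else if k = 2 then vector [1,-1,-1]
                  else if k = 3 then vector [-1,1,-1] else vector [-1,-1,1])"

definition bary :: "nat \<Rightarrow> real^3 \<Rightarrow> real" where
  "bary k z = (1 + tet_vertex k \<bullet> z) / 4"

lemma bary_simps:
  "bary 1 z = (1 + z$1 + z$2 + z$3) / 4"
  "bary (Suc 0) z = (1 + z$1 + z$2 + z$3) / 4"
  "bary 2 z = (1 + z$1 - z$2 - z$3) / 4"
  "bary 3 z = (1 - z$1 + z$2 - z$3) / 4"
  "bary 4 z = (1 - z$1 - z$2 + z$3) / 4"
  by (simp_all add: bary_def tet_vertex_def inner_vec_def sum_3)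

lemma bary_sum: "bary 1 z + bary 2 z + bary 3 z + bary 4 z = 1"
  by (simp add: bary_simps field_simps)

lemma bary_affine: "u + v = 1 \<Longrightarrow> bary k (u *\<^sub>R x + v *\<^sub>R y) = u * bary k x + v * bary k y"
  unfolding bary_def by (simp add: inner_add_right field_simps)

lemma continuous_on_bary: "continuous_on S (bary k)"
  unfolding bary_def by (intro continuous_intros) auto

definition tet_solid :: "(real^3) set" where
  "tet_solid = {z. \<forall>k\<in>{1,2,3,4}. 0 \<le> bary k z}"

definition tet_face :: "nat \<Rightarrow> (real^3) set" where
  "tet_face k = {z \<in> tet_solid. bary k z = 0}"

lemma tet_face_iff:
  "z \<in> tet_face k \<longleftrightarrow> bary k z = 0 \<and> (\<forall>k'\<in>{1,2,3,4}. 0 \<le> bary k' z)"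
  by (auto simp: tet_face_def tet_solid_def)

lemma closed_tet_solid: "closed tet_solid"
proof -
  have eq: "tet_solid = (\<Inter>k\<in>{1,2,3,4}. {z. 0 \<le> bary k z})" by (auto simp: tet_solid_def)
  show ?thesis unfolding eq by (intro closed_INT ballI closed_Collect_le continuous_on_const continuous_on_bary)
qed

lemma closed_tet_face: "closed (tet_face k)"
proof -
  have "tet_face k = tet_solid \<inter> {z. bary k z = 0}" by (auto simp: tet_face_def)
  thus ?thesis
    by (auto intro!: closed_tet_solid closed_Collect_eq continuous_on_const continuous_on_bary)
qed

lemma convex_hull_tet_vertices:
  "convex hull {vector [1,1,1], vector [1,-1,-1], vector [-1,1,-1], vector [-1,-1,1]} = tet_solid"
    (is "convex hull ?V = _")
proof
  have "?V = tet_vertex ` {1,2,3,4}" by (simp add: tet_vertex_def insert_commute)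
  moreover have "convex tet_solid" unfolding convex_def tet_solid_def by (auto simp: bary_affine)
  moreover have "tet_vertex ` {1,2,3,4} \<subseteq> tet_solid"
    by (auto simp: tet_solid_def bary_simps tet_vertex_def)
  ultimately show "convex hull ?V \<subseteq> tet_solid" by (simp add: hull_minimal)
next
  show "tet_solid \<subseteq> convex hull ?V"
  proof
    fix z assume z: "z \<in> tet_solid"
    have "(\<Sum>k\<in>{1::nat,2,3,4}. bary k z *\<^sub>R tet_vertex k) \<in> convex hull ?V"
    proof (rule convex_sum)
      show "(\<Sum>k\<in>{1::nat,2,3,4}. bary k z) = 1" using bary_sum[of z] by (simp add: add.assoc)
    qed (use z in \<open>auto simp: tet_solid_def tet_vertex_def intro: hull_inc\<close>)
    moreover have "(\<Sum>k\<in>{1::nat,2,3,4}. bary k z *\<^sub>R tet_vertex k) = z"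
      unfolding vec_eq_iff forall_3 by (simp add: bary_simps tet_vertex_def field_simps)
    ultimately show "z \<in> convex hull ?V" by simp
  qed
qed

lemma interior_tet_solid: "interior tet_solid = {z. \<forall>k\<in>{1,2,3,4}. 0 < bary k z}"
proof
  show "{z. \<forall>k\<in>{1,2,3,4}. 0 < bary k z} \<subseteq> interior tet_solid"
  proof (rule interior_maximal)
    have eq: "{z. \<forall>k\<in>{1,2,3,4}. 0 < bary k z} = (\<Inter>k\<in>{1,2,3,4}. {z. 0 < bary k z})" by auto
    show "open {z. \<forall>k\<in>{1,2,3,4}. 0 < bary k z}" unfolding eq
      by (intro open_INT ballI open_Collect_less continuous_on_const continuous_on_bary finite.intros)
  qed (auto simp: tet_solid_def)
next
  show "interior tet_solid \<subseteq> {z. \<forall>k\<in>{1,2,3,4}. 0 < bary k z}"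
  proof
    fix z assume "z \<in> interior tet_solid"
    then obtain e where e: "e > 0" "ball z e \<subseteq> tet_solid"
      using mem_interior by blast
    have "0 < bary k z" if k: "k \<in> {1,2,3,4}" for k
    proof -
      \<comment> \<open>stepping from z away from vertex k lowers bary k, which therefore cannot vanish at z\<close>
      define c where "c = e / 4"
      have vk: "tet_vertex k \<bullet> tet_vertex k = 3" using k by (auto simp: tet_vertex_def inner_vec_def sum_3)
      have "norm (tet_vertex k) = sqrt 3" using vk by (simp add: norm_eq_sqrt_inner)
      hence "dist z (z - c *\<^sub>R tet_vertex k) = c * sqrt 3" using e by (simp add: c_def dist_norm)
      also have "\<dots> < e"
        using e real_less_lsqrt[of 4 3] by (simp add: c_def)
      finally have "z - c *\<^sub>R tet_vertex k \<in> tet_solid" using e by (auto simp: dist_commute)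
      hence "0 \<le> bary k (z - c *\<^sub>R tet_vertex k)" using k unfolding tet_solid_def by blast
      moreover have "bary k (z - c *\<^sub>R tet_vertex k) = bary k z - 3 / 4 * c"
        using vk by (simp add: bary_def inner_diff_right field_simps)
      ultimately show "0 < bary k z" using e by (simp add: c_def)
    qed
    thus "z \<in> {z. \<forall>k\<in>{1,2,3,4}. 0 < bary k z}" by blast
  qed
qed

lemma tet_surface_eq_faces: "tet_surface = (\<Union>k\<in>{1,2,3,4}. tet_face k)"
proof -
  have "tet_solid - {z. \<forall>k\<in>{1,2,3,4}. 0 < bary k z} = (\<Union>k\<in>{1,2,3,4}. tet_face k)"
  proof (intro set_eqI iffI)
    fix z assume z: "z \<in> tet_solid - {z. \<forall>k\<in>{1,2,3,4}. 0 < bary k z}"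
    then obtain k where k: "k \<in> {1,2,3,4}" "\<not> 0 < bary k z" by blast
    hence "z \<in> tet_face k" using z by (auto simp: tet_face_def tet_solid_def simp del: insert_iff)
    thus "z \<in> (\<Union>k\<in>{1,2,3,4}. tet_face k)" using k(1) by blast
  next
    fix z assume "z \<in> (\<Union>k\<in>{1,2,3,4}. tet_face k)"
    then obtain k where "k \<in> {1,2,3,4}" "z \<in> tet_face k" by blast
    thus "z \<in> tet_solid - {z. \<forall>k\<in>{1,2,3,4}. 0 < bary k z}"
      unfolding tet_face_def by (force simp del: insert_iff)
  qed
  thus ?thesis
    unfolding tet_surface_def convex_hull_tet_vertices frontier_def interior_tet_solid
      closure_closed[OF closed_tet_solid] .
qed

lemma locally_common_closed_set:
  fixes F :: "'i \<Rightarrow> 'a::metric_space set"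
  assumes "finite K" "\<And>k. k \<in> K \<Longrightarrow> closed (F k)"
  obtains r where "r > 0"
    "\<And>w. w \<in> (\<Union>k\<in>K. F k) \<Longrightarrow> dist w p < r \<Longrightarrow> \<exists>k\<in>K. p \<in> F k \<and> w \<in> F k"
proof -
  define U where "U = (\<Union>k\<in>{k\<in>K. p \<notin> F k}. F k)"
  have "closed U" using assms by (auto simp: U_def)
  moreover have "p \<notin> U" by (auto simp: U_def)
  ultimately obtain r where "r > 0" "\<forall>w. dist w p < r \<longrightarrow> w \<in> - U"
    unfolding closed_def open_dist by blast
  thus ?thesis using that unfolding U_def by blast
qed


section \<open>The hexagonal norm\<close>

type_synonym pt = "real \<times> real"

lemma half_scaleR_add_self: "(1/2) *\<^sub>R v + (1/2) *\<^sub>R v = (v :: 'a::real_vector)"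
  by (simp flip: scaleR_add_left)

definition hex_form :: "pt \<Rightarrow> real" where
  "hex_form w = (fst w)\<^sup>2 + fst w * snd w + (snd w)\<^sup>2"

definition hex_norm :: "pt \<Rightarrow> real" where
  "hex_norm w = sqrt (8 * hex_form w)"

definition hex_embed :: "pt \<Rightarrow> real \<times> real" where
  "hex_embed w = (sqrt 2 * (2 * fst w + snd w), sqrt 6 * snd w)"

lemma hex_norm_eq_norm_embed: "hex_norm w = norm (hex_embed w)"
proof -
  have "(sqrt 2 * (2 * fst w + snd w))\<^sup>2 + (sqrt 6 * snd w)\<^sup>2 = 8 * hex_form w"
    by (simp add: hex_form_def power2_eq_square algebra_simps)
  thus ?thesis by (simp add: hex_norm_def hex_embed_def norm_Pair)
qed

lemma hex_embed_add: "hex_embed (a + b) = hex_embed a + hex_embed b"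
  and hex_embed_diff: "hex_embed (a - b) = hex_embed a - hex_embed b"
  and hex_embed_scaleR: "hex_embed (c *\<^sub>R a) = c *\<^sub>R hex_embed a"
  by (simp_all add: hex_embed_def algebra_simps)

lemma hex_embed_inject: "hex_embed a = hex_embed b \<longleftrightarrow> a = b"
  by (cases a; cases b) (auto simp: hex_embed_def)

lemma hex_norm_nonneg: "0 \<le> hex_norm w"
  by (simp add: hex_norm_eq_norm_embed)

lemma hex_norm_add_le: "hex_norm (a + b) \<le> hex_norm a + hex_norm b"
  by (simp add: hex_norm_eq_norm_embed hex_embed_add norm_triangle_ineq)

lemma hex_norm_scaleR: "hex_norm (c *\<^sub>R w) = \<bar>c\<bar> * hex_norm w"
  by (simp add: hex_norm_eq_norm_embed hex_embed_scaleR)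

lemma hex_norm_minus_commute: "hex_norm (a - b) = hex_norm (b - a)"
  using hex_norm_scaleR[of "-1" "a - b"] by simp

lemma hex_norm_zero [simp]: "hex_norm 0 = 0"
  by (simp add: hex_norm_def hex_form_def)

lemma hex_norm_triangle: "hex_norm (a - c) \<le> hex_norm (a - b) + hex_norm (b - c)"
  using hex_norm_add_le[of "a - b" "b - c"] by simp

lemma abs_hex_norm_diff_le: "\<bar>hex_norm a - hex_norm b\<bar> \<le> hex_norm (a - b)"
  by (simp add: hex_norm_eq_norm_embed hex_embed_diff norm_triangle_ineq3)

lemma hex_norm_minus [simp]: "hex_norm (- w) = hex_norm w"
  using hex_norm_scaleR[of "-1" w] by simp

lemma hex_norm_diff_le: "hex_norm (a - b) \<le> hex_norm a + hex_norm b"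
  using hex_norm_add_le[of a "- b"] by simp

lemma hex_norm_isometry_perturb:
  assumes "hex_norm (L y - L yb) = hex_norm (y - yb)"
  shows "\<bar>hex_norm (x - L y) - hex_norm (xb - L yb)\<bar> \<le> hex_norm (x - xb) + hex_norm (y - yb)"
proof -
  have "hex_norm ((x - L y) - (xb - L yb)) = hex_norm ((x - xb) - (L y - L yb))"
    by (simp add: algebra_simps)
  also have "\<dots> \<le> hex_norm (x - xb) + hex_norm (L y - L yb)" by (rule hex_norm_diff_le)
  finally show ?thesis using abs_hex_norm_diff_le[of "x - L y" "xb - L yb"] assms by linarith
qed

lemma tendsto_hex_norm [tendsto_intros]: "(f \<longlongrightarrow> a) F \<Longrightarrow> ((\<lambda>x. hex_norm (f x)) \<longlongrightarrow> hex_norm a) F"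
  unfolding hex_norm_eq_norm_embed hex_embed_def by (intro tendsto_intros)

lemma hex_norm_eq_0_iff: "hex_norm w = 0 \<longleftrightarrow> w = 0"
proof -
  have "hex_embed 0 = 0" by (simp add: hex_embed_def zero_prod_def)
  thus ?thesis using hex_embed_inject[of w 0] by (simp add: hex_norm_eq_norm_embed)
qed

lemma hex_form_nonneg: "0 \<le> hex_form w"
  using hex_norm_nonneg[of w] by (simp add: hex_norm_def)

lemma hex_form_pos: "w \<noteq> 0 \<Longrightarrow> 0 < hex_form w"
  using hex_norm_eq_0_iff[of w] hex_form_nonneg[of w] by (auto simp: hex_norm_def)

lemma hex_norm_le_iff: "hex_norm a \<le> hex_norm b \<longleftrightarrow> hex_form a \<le> hex_form b"
  by (simp add: hex_norm_def)

lemma hex_form_ge_fst: "3/4 * (fst w)\<^sup>2 \<le> hex_form w"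
  and hex_form_ge_snd: "3/4 * (snd w)\<^sup>2 \<le> hex_form w"
proof -
  have "hex_form w = (snd w + fst w / 2)\<^sup>2 + 3/4 * (fst w)\<^sup>2"
    by (simp add: hex_form_def power2_eq_square algebra_simps)
  thus "3/4 * (fst w)\<^sup>2 \<le> hex_form w" by simp
  have "hex_form w = (fst w + snd w / 2)\<^sup>2 + 3/4 * (snd w)\<^sup>2"
    by (simp add: hex_form_def power2_eq_square algebra_simps)
  thus "3/4 * (snd w)\<^sup>2 \<le> hex_form w" by simp
qed

lemma norm_le_hex_norm: "norm w \<le> hex_norm w"
proof -
  have "8 * hex_form w - ((fst w)\<^sup>2 + (snd w)\<^sup>2) = 4 * (fst w + snd w)\<^sup>2 + 3 * (fst w)\<^sup>2 + 3 * (snd w)\<^sup>2"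
    by (simp add: hex_form_def power2_eq_square algebra_simps)
  hence "(fst w)\<^sup>2 + (snd w)\<^sup>2 \<le> 8 * hex_form w"
    using zero_le_power2[of "fst w + snd w"] zero_le_power2[of "fst w"] zero_le_power2[of "snd w"]
    by linarith
  thus ?thesis by (cases w) (simp add: hex_norm_def norm_Pair real_le_rsqrt)
qed

lemma hex_norm_le_norm: "hex_norm w \<le> 4 * norm w"
proof -
  have "16 * ((fst w)\<^sup>2 + (snd w)\<^sup>2) - 8 * hex_form w = 4 * (fst w - snd w)\<^sup>2 + 4 * (fst w)\<^sup>2 + 4 * (snd w)\<^sup>2"
    by (simp add: hex_form_def power2_eq_square algebra_simps)
  hence "8 * hex_form w \<le> 16 * ((fst w)\<^sup>2 + (snd w)\<^sup>2)"
    using zero_le_power2[of "fst w - snd w"] zero_le_power2[of "fst w"] zero_le_power2[of "snd w"]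
    by linarith
  hence "8 * hex_form w \<le> (4 * norm w)\<^sup>2" by (cases w) (simp add: norm_Pair power_mult_distrib)
  thus ?thesis by (simp add: hex_norm_def real_le_lsqrt)
qed

lemma abs_fst_le_hex_norm: "\<bar>fst w\<bar> \<le> hex_norm w"
proof -
  have "\<bar>fst w\<bar> \<le> norm w" by (cases w) (simp add: norm_Pair real_le_rsqrt)
  thus ?thesis using norm_le_hex_norm[of w] by linarith
qed

lemma continuous_on_hex_norm_diff: "continuous_on S (\<lambda>q. hex_norm (a - q))"
  unfolding hex_norm_eq_norm_embed hex_embed_diff hex_embed_def by (intro continuous_intros)


section \<open>Folding the plane onto the tetrahedron\<close>

text \<open>The lines x \<in> \<int>, y \<in> \<int>, x + y \<in> \<int> cut the plane into triangles that are equilateral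
  for hex_norm. The map tet_fold sends each of them isometrically onto a face (this is where the
  factor 8 in hex_norm comes from), and two points have the same image iff they differ by a
  deck transformation p \<mapsto> \<plusminus>p + 2(i, j).\<close>

definition tet_fold :: "pt \<Rightarrow> real^3" where
  "tet_fold p = vector [tri_wave (snd p), tri_wave (fst p), tri_wave (fst p + snd p)]"

lemma tet_fold_nth:
  "tet_fold p $ 1 = tri_wave (snd p)" "tet_fold p $ 2 = tri_wave (fst p)"
  "tet_fold p $ 3 = tri_wave (fst p + snd p)"
  by (simp_all add: tet_fold_def)

lemma dist_vec3:
  "dist (z :: real^3) w = sqrt ((z$1 - w$1)\<^sup>2 + (z$2 - w$2)\<^sup>2 + (z$3 - w$3)\<^sup>2)"
  by (simp add: dist_norm norm_eq_sqrt_inner inner_vec_def sum_3 power2_eq_square)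

lemma tet_fold_lipschitz: "dist (tet_fold p) (tet_fold q) \<le> hex_norm (p - q)"
proof -
  have sq: "(tri_wave s - tri_wave t)\<^sup>2 \<le> 4 * (s - t)\<^sup>2" for s t
  proof -
    have "\<bar>tri_wave s - tri_wave t\<bar>\<^sup>2 \<le> (2 * \<bar>s - t\<bar>)\<^sup>2"
      using tri_wave_lipschitz[of s t] by (intro power_mono) auto
    thus ?thesis by (simp add: power_mult_distrib)
  qed
  have "4 * (snd p - snd q)\<^sup>2 + 4 * (fst p - fst q)\<^sup>2 + 4 * ((fst p + snd p) - (fst q + snd q))\<^sup>2
      = 8 * hex_form (p - q)"
    by (simp add: hex_form_def power2_eq_square algebra_simps)
  thus ?thesis
    using sq[of "snd p" "snd q"] sq[of "fst p" "fst q"] sq[of "fst p + snd p" "fst q + snd q"]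
    unfolding dist_vec3 hex_norm_def tet_fold_nth by (intro real_sqrt_le_mono) linarith
qed

lemma continuous_on_tet_fold: "continuous_on S tet_fold"
proof (rule continuous_on_iff[THEN iffD2], intro ballI allI impI)
  fix x and e :: real assume "0 < e"
  show "\<exists>d>0. \<forall>y\<in>S. dist y x < d \<longrightarrow> dist (tet_fold y) (tet_fold x) < e"
  proof (intro exI[of _ "e/4"] conjI ballI impI)
    fix y assume "dist y x < e / 4"
    thus "dist (tet_fold y) (tet_fold x) < e"
      using tet_fold_lipschitz[of y x] hex_norm_le_norm[of "y - x"] by (simp add: dist_norm)
  qed (use \<open>0 < e\<close> in simp)
qed

definition deck :: "real \<Rightarrow> int \<Rightarrow> int \<Rightarrow> pt \<Rightarrow> pt" where
  "deck e i j p = (e * fst p + 2 * of_int i, e * snd p + 2 * of_int j)"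

lemma deck_diff: "deck e i j y - deck e i j y' = e *\<^sub>R (y - y')"
  by (simp add: deck_def algebra_simps prod_eq_iff)

lemma hex_norm_deck_diff:
  "e = 1 \<or> e = -1 \<Longrightarrow> hex_norm (deck e i j y - deck e i j y') = hex_norm (y - y')"
  by (auto simp: deck_diff hex_norm_scaleR)

lemma tet_fold_deck: "e = 1 \<or> e = -1 \<Longrightarrow> tet_fold (deck e i j p) = tet_fold p"
proof -
  assume e: "e = 1 \<or> e = -1"
  have sum: "fst (deck e i j p) + snd (deck e i j p) = e * (fst p + snd p) + 2 * of_int (i + j)"
    by (simp add: deck_def algebra_simps)
  have "tri_wave (e * t + 2 * of_int k) = tri_wave t" for t k
    using e by (auto simp: tri_wave_periodic tri_wave_minus)
  thus ?thesis unfolding vec_eq_iff forall_3 tet_fold_nth sum by (simp add: deck_def del: of_int_add)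
qed

lemma tet_fold_eqE:
  assumes "tet_fold q = tet_fold p"
  obtains e i j where "e = 1 \<or> e = -1" "q = deck e i j p"
proof -
  have "tri_wave (fst q) = tri_wave (fst p)" "tri_wave (snd q) = tri_wave (snd p)"
    "tri_wave (fst q + snd q) = tri_wave (fst p + snd p)"
    using assms unfolding vec_eq_iff forall_3 tet_fold_nth by simp_all
  then obtain e1 k1 e2 k2 e3 k3 where
    k1: "e1 = 1 \<or> e1 = -1" "fst q = e1 * fst p + 2 * of_int k1" and
    k2: "e2 = 1 \<or> e2 = -1" "snd q = e2 * snd p + 2 * of_int k2" and
    k3: "e3 = 1 \<or> e3 = -1" "fst q + snd q = e3 * (fst p + snd p) + 2 * of_int k3"
    by (metis tri_wave_eqD)
  \<comment> \<open>two of the three signs agree\<close>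
  consider "e2 = e1" | "e3 = e1" | "e3 = e2" using k1(1) k2(1) k3(1) by linarith
  thus ?thesis
  proof cases
    case 1
    hence "q = deck e1 k1 k2 p" using k1 k2 by (cases q) (simp add: deck_def)
    thus ?thesis using that k1(1) by blast
  next
    case 2
    hence "q = deck e1 k1 (k3 - k1) p" using k1 k3 by (cases q) (simp add: deck_def algebra_simps)
    thus ?thesis using that k1(1) by blast
  next
    case 3
    hence "q = deck e2 (k3 - k2) k2 p" using k2 k3 by (cases q) (simp add: deck_def algebra_simps)
    thus ?thesis using that k2(1) by blast
  qed
qed

definition face_chart :: "nat \<Rightarrow> real^3 \<Rightarrow> pt" where
  "face_chart k z =
     (if k = 1 then (bary 2 z + bary 4 z, bary 3 z + bary 4 z)
      else if k = 2 then (2 * bary 1 z + 2 * bary 3 z + bary 4 z, bary 3 z + bary 4 z)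
      else if k = 3 then (2 * bary 1 z + bary 2 z + bary 4 z, bary 4 z)
      else (bary 2 z, bary 3 z))"

lemma tet_fold_face_chart:
  assumes k: "k \<in> {1,2,3,4}" and z: "z \<in> tet_face k"
  shows "tet_fold (face_chart k z) = z"
proof -
  have nn: "0 \<le> bary 1 z" "0 \<le> bary 2 z" "0 \<le> bary 3 z" "0 \<le> bary 4 z" and z0: "bary k z = 0"
    using z by (auto simp: tet_face_iff)
  note s = bary_sum[of z]
  note tri = tri_wave_01 tri_wave_12 tri_wave_23
  from k consider "k = 1" | "k = 2" | "k = 3" | "k = 4" by auto
  thus ?thesis
  proof cases
    case 1
    with z0 have z0': "bary 1 z = 0" by simp
    hence "tri_wave (bary 3 z + bary 4 z) = 1 - 2 * (bary 3 z + bary 4 z) \<and>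
        tri_wave (bary 2 z + bary 4 z) = 1 - 2 * (bary 2 z + bary 4 z) \<and>
        tri_wave (bary 2 z + bary 4 z + (bary 3 z + bary 4 z))
          = 2 * (bary 2 z + bary 4 z + (bary 3 z + bary 4 z)) - 3"
      by (intro conjI tri; use nn s in linarith)
    thus ?thesis using 1 z0' unfolding vec_eq_iff forall_3 tet_fold_nth
      by (simp add: face_chart_def bary_simps) (simp add: field_simps)
  next
    case 2
    with z0 have z0': "bary 2 z = 0" by simp
    hence "tri_wave (bary 3 z + bary 4 z) = 1 - 2 * (bary 3 z + bary 4 z) \<and>
        tri_wave (2 * bary 1 z + 2 * bary 3 z + bary 4 z) = 2 * (2 * bary 1 z + 2 * bary 3 z + bary 4 z) - 3 \<and>
        tri_wave (2 * bary 1 z + 2 * bary 3 z + bary 4 z + (bary 3 z + bary 4 z))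
          = 5 - 2 * (2 * bary 1 z + 2 * bary 3 z + bary 4 z + (bary 3 z + bary 4 z))"
      by (intro conjI tri; use nn s in linarith)
    thus ?thesis using 2 z0' unfolding vec_eq_iff forall_3 tet_fold_nth
      by (simp add: face_chart_def bary_simps) (simp add: field_simps)
  next
    case 3
    with z0 have z0': "bary 3 z = 0" by simp
    hence "tri_wave (bary 4 z) = 1 - 2 * bary 4 z \<and>
        tri_wave (2 * bary 1 z + bary 2 z + bary 4 z) = 2 * (2 * bary 1 z + bary 2 z + bary 4 z) - 3 \<and>
        tri_wave (2 * bary 1 z + bary 2 z + bary 4 z + bary 4 z)
          = 2 * (2 * bary 1 z + bary 2 z + bary 4 z + bary 4 z) - 3"
      by (intro conjI tri; use nn s in linarith)
    thus ?thesis using 3 z0' unfolding vec_eq_iff forall_3 tet_fold_nth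
      by (simp add: face_chart_def bary_simps) (simp add: field_simps)
  next
    case 4
    with z0 have z0': "bary 4 z = 0" by simp
    hence "tri_wave (bary 3 z) = 1 - 2 * bary 3 z \<and> tri_wave (bary 2 z) = 1 - 2 * bary 2 z \<and>
        tri_wave (bary 2 z + bary 3 z) = 1 - 2 * (bary 2 z + bary 3 z)"
      by (intro conjI tri; use nn s in linarith)
    thus ?thesis using 4 z0' unfolding vec_eq_iff forall_3 tet_fold_nth
      by (simp add: face_chart_def bary_simps) (simp add: field_simps)
  qed
qed

lemma hex_norm_face_chart:
  assumes k: "k \<in> {1,2,3,4}" and z: "z \<in> tet_face k" and w: "w \<in> tet_face k"
  shows "hex_norm (face_chart k z - face_chart k w) = dist z w"
proof -
  have "bary k z = 0" "bary k w = 0" using z w by (auto simp: tet_face_iff)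
  from k this have
    "8 * hex_form (face_chart k z - face_chart k w) = (z$1 - w$1)\<^sup>2 + (z$2 - w$2)\<^sup>2 + (z$3 - w$3)\<^sup>2"
  proof (elim insertE emptyE)
    assume "k = 1" "bary k z = 0" "bary k w = 0"
    hence k: "k = 1" and e: "z$3 = -1 - z$1 - z$2" "w$3 = -1 - w$1 - w$2" by (simp_all add: bary_simps)
    show ?thesis by (simp add: k e face_chart_def bary_simps hex_form_def power2_eq_square field_simps)
  next
    assume "k = 2" "bary k z = 0" "bary k w = 0"
    hence k: "k = 2" and e: "z$3 = 1 + z$1 - z$2" "w$3 = 1 + w$1 - w$2" by (simp_all add: bary_simps)
    show ?thesis by (simp add: k e face_chart_def bary_simps hex_form_def power2_eq_square field_simps)
  next
    assume "k = 3" "bary k z = 0" "bary k w = 0"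
    hence k: "k = 3" and e: "z$3 = 1 - z$1 + z$2" "w$3 = 1 - w$1 + w$2" by (simp_all add: bary_simps)
    show ?thesis by (simp add: k e face_chart_def bary_simps hex_form_def power2_eq_square field_simps)
  next
    assume "k = 4" "bary k z = 0" "bary k w = 0"
    hence k: "k = 4" and e: "z$3 = -1 + z$1 + z$2" "w$3 = -1 + w$1 + w$2" by (simp_all add: bary_simps)
    show ?thesis by (simp add: k e face_chart_def bary_simps hex_form_def power2_eq_square field_simps)
  qed
  thus ?thesis unfolding hex_norm_def dist_vec3 by simp
qed

lemma tet_surface_iff:
  "z \<in> tet_surface \<longleftrightarrow> (\<forall>k\<in>{1,2,3,4}. 0 \<le> bary k z) \<and> (\<exists>k\<in>{1,2,3,4}. bary k z = 0)"
  by (auto simp: tet_surface_eq_faces tet_face_iff)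

lemma tet_fold_in_surface: "tet_fold p \<in> tet_surface"
proof -
  \<comment> \<open>by a deck transformation, p may be moved into the square [0,1] \<times> [-1,1]\<close>
  obtain m n :: int where m: "\<bar>fst p - 2 * of_int m\<bar> \<le> 1" and n: "\<bar>snd p - 2 * of_int n\<bar> \<le> 1"
    using tri_wave_ex by blast
  define a where "a = fst p - 2 * of_int m"
  define b where "b = snd p - 2 * of_int n"
  have in_square: "tet_fold (a, b) \<in> tet_surface" if "0 \<le> a" "a \<le> 1" "-1 \<le> b" "b \<le> 1" for a b
  proof -
    consider "0 \<le> b" "a + b \<le> 1" | "0 \<le> b" "1 \<le> a + b" | "b \<le> 0" "0 \<le> a + b" | "b \<le> 0" "a + b \<le> 0"
      by linarith
    thus ?thesis using that unfolding tet_surface_iff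
      by cases (simp_all add: bary_simps tet_fold_nth tri_wave_01 tri_wave_12 tri_wave_m10)
  qed
  have "tet_fold p = tet_fold (a, b)"
    using tet_fold_deck[of 1 "- m" "- n" p] by (simp add: deck_def a_def b_def)
  moreover have "tet_fold (a, b) = tet_fold (- a, - b)"
    using tet_fold_deck[of "-1" 0 0 "(a, b)"] by (simp add: deck_def)
  ultimately show ?thesis
    using in_square[of a b] in_square[of "- a" "- b"] m n by (cases "0 \<le> a") (auto simp: a_def b_def)
qed

lemma tet_surface_eq_range: "tet_surface = range tet_fold"
proof
  show "tet_surface \<subseteq> range tet_fold"
  proof
    fix z assume "z \<in> tet_surface"
    then obtain k where "k \<in> {1,2,3,4}" "z \<in> tet_face k" unfolding tet_surface_eq_faces by blast
    thus "z \<in> range tet_fold" using tet_fold_face_chart by (metis rangeI)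
  qed
qed (auto simp: tet_fold_in_surface)


section \<open>Partition sums\<close>

fun chain_sum :: "('a \<Rightarrow> 'a \<Rightarrow> real) \<Rightarrow> (real \<Rightarrow> 'a) \<Rightarrow> real list \<Rightarrow> real" where
  "chain_sum d g (a # b # ts) = d (g a) (g b) + chain_sum d g (b # ts)"
| "chain_sum d g _ = 0"

lemma sum_eq_chain_sum: "(\<Sum>i<length ts - 1. d (g (ts ! i)) (g (ts ! Suc i))) = chain_sum d g ts"
proof (induction d g ts rule: chain_sum.induct)
  case (1 d g a b ts)
  have "(\<Sum>i<length (a # b # ts) - 1. d (g ((a # b # ts) ! i)) (g ((a # b # ts) ! Suc i)))
      = d (g a) (g b) + (\<Sum>i<length ts. d (g ((b # ts) ! i)) (g ((b # ts) ! Suc i)))"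
    by (simp add: sum.lessThan_Suc_shift del: sum.lessThan_Suc)
  thus ?case using 1 by simp
qed auto

lemma path_len_eq_SUP_chain_sum:
  "path_len d g = (SUP ts \<in> {ts. ts \<noteq> [] \<and> sorted ts \<and> hd ts = 0 \<and> last ts = 1}. ereal (chain_sum d g ts))"
  by (simp only: path_len_def sum_eq_chain_sum)

lemma chain_sum_le_path_len:
  assumes "ts \<noteq> []" "sorted ts" "hd ts = 0" "last ts = 1"
  shows "ereal (chain_sum d g ts) \<le> path_len d g"
  unfolding path_len_eq_SUP_chain_sum by (rule SUP_upper) (use assms in auto)

lemma chain_sum_snoc: "ts \<noteq> [] \<Longrightarrow> chain_sum d g (ts @ [x]) = chain_sum d g ts + d (g (last ts)) (g x)"
  by (induction d g ts rule: chain_sum.induct) auto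

lemma sorted_le_last: "sorted xs \<Longrightarrow> xs \<noteq> [] \<Longrightarrow> x \<in> set xs \<Longrightarrow> x \<le> last xs"
  by (induction xs) auto

definition chain_sum_bounds_incr :: "(real \<Rightarrow> real) \<Rightarrow> ('a \<Rightarrow> 'a \<Rightarrow> real) \<Rightarrow> (real \<Rightarrow> 'a) \<Rightarrow> real \<Rightarrow> bool" where
  "chain_sum_bounds_incr f d g x \<longleftrightarrow>
     (\<exists>ts. ts \<noteq> [] \<and> sorted ts \<and> hd ts = 0 \<and> last ts = x \<and> f x - f 0 \<le> chain_sum d g ts)"

lemma chain_sum_bounds_incr_0: "chain_sum_bounds_incr f d g 0"
  unfolding chain_sum_bounds_incr_def by (intro exI[of _ "[0]"]) simp

lemma chain_sum_bounds_incr_extend: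
  assumes "chain_sum_bounds_incr f d g y" "y \<le> x" "f x - f y \<le> d (g y) (g x)"
  shows "chain_sum_bounds_incr f d g x"
proof -
  obtain ts where ts: "ts \<noteq> []" "sorted ts" "hd ts = 0" "last ts = y" "f y - f 0 \<le> chain_sum d g ts"
    using assms(1) unfolding chain_sum_bounds_incr_def by blast
  have "sorted (ts @ [x])"
    using ts(1,2,4) assms(2) sorted_le_last[OF ts(2,1)] by (fastforce simp: sorted_append)
  moreover have "chain_sum d g (ts @ [x]) = chain_sum d g ts + d (g y) (g x)"
    using chain_sum_snoc[OF ts(1)] ts(4) by simp
  ultimately show ?thesis unfolding chain_sum_bounds_incr_def using ts assms(3)
    by (intro exI[of _ "ts @ [x]"]) auto
qed

text \<open>A real induction along [0,1]: the supremum of the parameters up to which the increment of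
  f is bounded by a partition sum is 1, and is attained.\<close>

lemma chain_sum_bounds_incr_of_local_bound:
  assumes loc: "\<And>t. t \<in> {0..1} \<Longrightarrow> \<exists>\<eta>>0. \<forall>s\<in>{0..1}. \<bar>s - t\<bar> < \<eta> \<longrightarrow>
       f s - f t \<le> d (g t) (g s) \<and> f t - f s \<le> d (g s) (g t)"
  shows "chain_sum_bounds_incr f d g 1"
proof -
  define A where "A = {x \<in> {0..1}. chain_sum_bounds_incr f d g x}"
  have A0: "0 \<in> A" by (simp add: A_def chain_sum_bounds_incr_0)
  have bdd: "bdd_above A" unfolding A_def by (intro bdd_aboveI[of _ 1]) auto
  define s where "s = Sup A"
  have s0: "0 \<le> s" unfolding s_def using A0 bdd by (rule cSup_upper)
  have s1: "s \<le> 1" unfolding s_def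
  proof (rule cSup_least)
    show "A \<noteq> {}" using A0 by blast
    show "x \<le> 1" if "x \<in> A" for x using that by (simp add: A_def)
  qed
  obtain \<eta> where \<eta>: "\<eta> > 0" "\<forall>r\<in>{0..1}. \<bar>r - s\<bar> < \<eta> \<longrightarrow>
      f r - f s \<le> d (g s) (g r) \<and> f s - f r \<le> d (g r) (g s)"
    using loc[of s] s0 s1 by auto
  have "s - \<eta> < Sup A" using \<eta>(1) s_def by simp
  then obtain y where y: "y \<in> A" "s - \<eta> < y" using A0 bdd less_cSup_iff[of A "s - \<eta>"] by blast
  have "y \<le> s" unfolding s_def using y(1) bdd by (rule cSup_upper)
  hence sA: "chain_sum_bounds_incr f d g s"
    using chain_sum_bounds_incr_extend[of f d g y s] \<eta> y unfolding A_def by (simp add: abs_if)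
  show ?thesis
  proof (cases "s = 1")
    case False
    define x where "x = min 1 (s + \<eta> / 2)"
    have x: "s < x" "x \<in> {0..1}" "\<bar>x - s\<bar> < \<eta>" using False s0 s1 \<eta>(1) by (auto simp: x_def)
    hence "x \<in> A" using chain_sum_bounds_incr_extend[OF sA] \<eta>(2) by (auto simp: A_def)
    hence "x \<le> s" unfolding s_def using bdd by (rule cSup_upper)
    thus ?thesis using x(1) by simp
  qed (use sA in simp)
qed


section \<open>The intrinsic distance via lifts to the plane\<close>

definition lift_dist :: "pt \<Rightarrow> real^3 \<Rightarrow> real" where
  "lift_dist a z = Inf {hex_norm (a - q) | q. tet_fold q = z}"

lemma lift_dist_le: "tet_fold q = z \<Longrightarrow> lift_dist a z \<le> hex_norm (a - q)"
  unfolding lift_dist_def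
proof (rule cInf_lower)
  show "bdd_below {hex_norm (a - q) |q. tet_fold q = z}"
    by (rule bdd_belowI[of _ 0]) (auto simp: hex_norm_nonneg)
qed blast

lemma lift_dist_ge:
  "tet_fold q = z \<Longrightarrow> (\<And>q. tet_fold q = z \<Longrightarrow> m \<le> hex_norm (a - q)) \<Longrightarrow> m \<le> lift_dist a z"
  unfolding lift_dist_def by (rule cInf_greatest) blast+

lemma lift_dist_self: "lift_dist a (tet_fold a) = 0"
  using lift_dist_le[of a "tet_fold a" a] lift_dist_ge[of a "tet_fold a" 0 a]
  by (simp add: hex_norm_nonneg)

lemma lift_dist_attained: "\<exists>q. tet_fold q = tet_fold b \<and> lift_dist a (tet_fold b) = hex_norm (a - q)"
proof -
  \<comment> \<open>only the lifts in a compact ball around a can beat the lift b\<close>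
  define S where "S = {q. tet_fold q = tet_fold b} \<inter> cball a (hex_norm (a - b))"
  have "closed {q. tet_fold q = tet_fold b}"
    by (intro closed_Collect_eq continuous_on_tet_fold continuous_on_const)
  hence "compact S" unfolding S_def by (simp add: compact_Int_closed Int_commute)
  moreover have "b \<in> S" unfolding S_def using norm_le_hex_norm[of "a - b"] by (simp add: dist_norm)
  ultimately obtain q0 where q0: "q0 \<in> S" "\<forall>q\<in>S. hex_norm (a - q0) \<le> hex_norm (a - q)"
    using continuous_attains_inf[OF _ _ continuous_on_hex_norm_diff] by blast
  have "tet_fold q0 = tet_fold b" using q0(1) by (simp add: S_def)
  have "hex_norm (a - q0) \<le> hex_norm (a - q)" if "tet_fold q = tet_fold b" for q
  proof (cases "q \<in> S")
    case False
    hence "hex_norm (a - b) < norm (a - q)" using that by (simp add: S_def dist_norm)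
    moreover have "hex_norm (a - q0) \<le> hex_norm (a - b)" using q0(2) \<open>b \<in> S\<close> by blast
    ultimately show ?thesis using norm_le_hex_norm[of "a - q"] by linarith
  qed (use q0 in blast)
  hence "hex_norm (a - q0) \<le> lift_dist a (tet_fold b)"
    by (intro lift_dist_ge[OF \<open>tet_fold q0 = tet_fold b\<close>])
  moreover have "lift_dist a (tet_fold b) \<le> hex_norm (a - q0)"
    by (rule lift_dist_le[OF \<open>tet_fold q0 = tet_fold b\<close>])
  ultimately show ?thesis using \<open>tet_fold q0 = tet_fold b\<close> by (intro exI[of _ q0]) simp
qed

lemma lift_dist_face_lipschitz:
  assumes k: "k \<in> {1,2,3,4}" and z: "z \<in> tet_face k" and w: "w \<in> tet_face k"
  shows "lift_dist a w \<le> lift_dist a z + dist z w"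
proof -
  have zu: "tet_fold (face_chart k z) = z" and wu: "tet_fold (face_chart k w) = w"
    using tet_fold_face_chart k z w by auto
  have "lift_dist a w - dist z w \<le> lift_dist a z"
  proof (rule lift_dist_ge[OF zu])
    fix q assume "tet_fold q = z"
    hence "tet_fold q = tet_fold (face_chart k z)" using zu by simp
    then obtain e i j where e: "e = 1 \<or> e = -1" "q = deck e i j (face_chart k z)"
      by (rule tet_fold_eqE)
    \<comment> \<open>the same deck transformation carries the chart of w to a lift of w\<close>
    define q' where "q' = deck e i j (face_chart k w)"
    have "tet_fold q' = w" unfolding q'_def using tet_fold_deck[OF e(1)] wu by simp
    hence "lift_dist a w \<le> hex_norm (a - q')" by (rule lift_dist_le)
    also have "\<dots> \<le> hex_norm (a - q) + hex_norm (q - q')" by (rule hex_norm_triangle)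
    also have "hex_norm (q - q') = dist z w"
      unfolding e(2) q'_def hex_norm_deck_diff[OF e(1)] by (rule hex_norm_face_chart[OF k z w])
    finally show "lift_dist a w - dist z w \<le> hex_norm (a - q)" by simp
  qed
  thus ?thesis by simp
qed

lemma lift_dist_path_bound:
  assumes "path g" "path_image g \<subseteq> tet_surface"
  shows "ereal (lift_dist a (g 1) - lift_dist a (g 0)) \<le> path_len dist g"
proof -
  have "chain_sum_bounds_incr (\<lambda>t. lift_dist a (g t)) dist g 1"
  proof (rule chain_sum_bounds_incr_of_local_bound)
    fix t :: real assume t: "t \<in> {0..1}"
    obtain r where r: "r > 0" "\<And>w. w \<in> (\<Union>k\<in>{1,2,3,4}. tet_face k) \<Longrightarrow> dist w (g t) < r \<Longrightarrow>
        \<exists>k\<in>{1,2,3,4}. g t \<in> tet_face k \<and> w \<in> tet_face k"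
      by (rule locally_common_closed_set[of "{1,2,3,4}" tet_face]) (auto intro: closed_tet_face)
    obtain \<eta> where \<eta>: "\<eta> > 0" "\<forall>s\<in>{0..1}. dist s t < \<eta> \<longrightarrow> dist (g s) (g t) < r"
      using assms(1) t r(1) unfolding path_def continuous_on_iff by blast
    show "\<exists>\<eta>>0. \<forall>s\<in>{0..1}. \<bar>s - t\<bar> < \<eta> \<longrightarrow>
       lift_dist a (g s) - lift_dist a (g t) \<le> dist (g t) (g s) \<and>
       lift_dist a (g t) - lift_dist a (g s) \<le> dist (g s) (g t)"
    proof (intro exI[of _ \<eta>] conjI ballI impI)
      fix s :: real assume s: "s \<in> {0..1}" "\<bar>s - t\<bar> < \<eta>"
      have "g s \<in> tet_surface" using assms(2) s by (auto simp: path_image_def)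
      moreover have "dist (g s) (g t) < r" using \<eta>(2) s by (simp add: dist_real_def)
      ultimately obtain k where k: "k \<in> {1,2,3,4}" "g t \<in> tet_face k" "g s \<in> tet_face k"
        using r(2) unfolding tet_surface_eq_faces by blast
      show "lift_dist a (g s) - lift_dist a (g t) \<le> dist (g t) (g s)"
        "lift_dist a (g t) - lift_dist a (g s) \<le> dist (g s) (g t)"
        using lift_dist_face_lipschitz[OF k(1) k(2) k(3), of a]
          lift_dist_face_lipschitz[OF k(1) k(3) k(2), of a] by linarith+
    qed (use \<eta> in simp)
  qed
  then obtain ts where ts: "ts \<noteq> []" "sorted ts" "hd ts = 0" "last ts = 1"
    "lift_dist a (g 1) - lift_dist a (g 0) \<le> chain_sum dist g ts"
    unfolding chain_sum_bounds_incr_def by blast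
  have "ereal (lift_dist a (g 1) - lift_dist a (g 0)) \<le> ereal (chain_sum dist g ts)" using ts by simp
  also have "\<dots> \<le> path_len dist g" by (rule chain_sum_le_path_len[OF ts(1-4)])
  finally show ?thesis .
qed

lemma path_len_fold_linepath:
  "path_len dist (\<lambda>t. tet_fold (linepath a b t)) \<le> ereal (hex_norm (b - a))"
proof -
  have "chain_sum dist (\<lambda>t. tet_fold (linepath a b t)) ts \<le> (last ts - hd ts) * hex_norm (b - a)"
    if "sorted ts" "ts \<noteq> []" for ts
    using that
  proof (induction "dist :: real^3 \<Rightarrow> _" "\<lambda>t. tet_fold (linepath a b t)" ts rule: chain_sum.induct)
    case (1 x y ts)
    have "linepath a b x - linepath a b y = (x - y) *\<^sub>R (b - a)"
      by (simp add: linepath_def algebra_simps)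
    hence "dist (tet_fold (linepath a b x)) (tet_fold (linepath a b y)) \<le> (y - x) * hex_norm (b - a)"
      using tet_fold_lipschitz[of "linepath a b x" "linepath a b y"] 1(2)
      by (simp add: hex_norm_scaleR)
    thus ?case using 1 by (simp add: algebra_simps)
  qed auto
  thus ?thesis unfolding path_len_eq_SUP_chain_sum by (intro SUP_least) fastforce
qed

lemma tet_dist_fold_eq_lift_dist: "tet_dist (tet_fold a) (tet_fold b) = lift_dist a (tet_fold b)"
proof -
  let ?S = "{g. path g \<and> path_image g \<subseteq> tet_surface \<and> pathstart g = tet_fold a \<and> pathfinish g = tet_fold b}"
  obtain q where q: "tet_fold q = tet_fold b" "lift_dist a (tet_fold b) = hex_norm (a - q)"
    using lift_dist_attained by blast
  have "(INF g\<in>?S. path_len dist g) = ereal (lift_dist a (tet_fold b))"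
  proof (rule antisym)
    \<comment> \<open>the fold of the segment from a to its nearest lift q is a shortest path\<close>
    define g where "g = (\<lambda>t. tet_fold (linepath a q t))"
    have "path g" unfolding g_def path_def
      using path_linepath[of a q, unfolded path_def]
      by (rule continuous_on_compose2[OF continuous_on_tet_fold[of UNIV]]) auto
    hence "g \<in> ?S"
      using q(1) unfolding g_def path_image_def tet_surface_eq_range pathstart_def pathfinish_def
      by (auto simp: linepath_def)
    hence "(INF g\<in>?S. path_len dist g) \<le> path_len dist g" by (rule INF_lower)
    also have "\<dots> \<le> ereal (hex_norm (q - a))" unfolding g_def by (rule path_len_fold_linepath)
    finally show "(INF g\<in>?S. path_len dist g) \<le> ereal (lift_dist a (tet_fold b))"
      using q(2) by (simp add: hex_norm_minus_commute)
  next
    show "ereal (lift_dist a (tet_fold b)) \<le> (INF g\<in>?S. path_len dist g)"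
    proof (rule INF_greatest)
      fix g assume g: "g \<in> ?S"
      hence "ereal (lift_dist a (g 1) - lift_dist a (g 0)) \<le> path_len dist g"
        by (intro lift_dist_path_bound) auto
      thus "ereal (lift_dist a (tet_fold b)) \<le> path_len dist g"
        using g by (simp add: pathstart_def pathfinish_def lift_dist_self)
    qed
  qed
  thus ?thesis unfolding tet_dist_def by simp
qed

lemma tet_dist_fold_nearest:
  obtains q where "tet_fold q = tet_fold b" "tet_dist (tet_fold a) (tet_fold b) = hex_norm (a - q)"
  using lift_dist_attained tet_dist_fold_eq_lift_dist by metis

lemma tet_dist_fold_le: "tet_fold q = tet_fold b \<Longrightarrow> tet_dist (tet_fold a) (tet_fold b) \<le> hex_norm (a - q)"
  unfolding tet_dist_fold_eq_lift_dist by (rule lift_dist_le)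

lemma tet_dist_fold_le_hex_norm: "tet_dist (tet_fold a) (tet_fold b) \<le> hex_norm (a - b)"
  by (rule tet_dist_fold_le) simp

lemma tet_dist_fold_ge:
  "(\<And>q. tet_fold q = tet_fold b \<Longrightarrow> m \<le> hex_norm (a - q)) \<Longrightarrow> m \<le> tet_dist (tet_fold a) (tet_fold b)"
  unfolding tet_dist_fold_eq_lift_dist by (rule lift_dist_ge) auto

lemma tet_dist_fold_nonneg: "0 \<le> tet_dist (tet_fold a) (tet_fold b)"
  by (rule tet_dist_fold_ge) (simp add: hex_norm_nonneg)

lemma tet_dist_fold_self: "tet_dist (tet_fold a) (tet_fold a) = 0"
  using tet_dist_fold_le_hex_norm[of a a] tet_dist_fold_nonneg[of a a] by simp

lemma tet_dist_fold_commute: "tet_dist (tet_fold a) (tet_fold b) = tet_dist (tet_fold b) (tet_fold a)"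
proof -
  have le: "tet_dist (tet_fold b) (tet_fold a) \<le> tet_dist (tet_fold a) (tet_fold b)" for a b
  proof -
    obtain q where q: "tet_fold q = tet_fold b" "tet_dist (tet_fold a) (tet_fold b) = hex_norm (a - q)"
      by (rule tet_dist_fold_nearest)
    then obtain e i j where e: "e = 1 \<or> e = -1" "q = deck e i j b" using tet_fold_eqE by metis
    \<comment> \<open>the inverse deck transformation, applied to q and a, gives b and a lift a' with b - a' = \<plusminus>(a - q)\<close>
    define a' where "a' = (if e = 1 then deck 1 (- i) (- j) a else deck (-1) i j a)"
    have "tet_fold a' = tet_fold a" by (simp add: a'_def tet_fold_deck)
    hence "tet_dist (tet_fold b) (tet_fold a) \<le> hex_norm (b - a')" by (rule tet_dist_fold_le)
    also have "hex_norm (b - a') = hex_norm (a - q)"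
    proof -
      have "b - a' = q - a \<or> b - a' = a - q" using e by (auto simp: a'_def deck_def prod_eq_iff)
      thus ?thesis using hex_norm_minus_commute[of q a] by auto
    qed
    finally show ?thesis using q by simp
  qed
  show ?thesis using le[of a b] le[of b a] by simp
qed

lemma tet_dist_fold_triangle:
  "tet_dist (tet_fold a) (tet_fold c) \<le> tet_dist (tet_fold a) (tet_fold b) + tet_dist (tet_fold b) (tet_fold c)"
proof -
  obtain qb where qb: "tet_fold qb = tet_fold b" "tet_dist (tet_fold a) (tet_fold b) = hex_norm (a - qb)"
    by (rule tet_dist_fold_nearest)
  obtain qc where qc: "tet_fold qc = tet_fold c" "tet_dist (tet_fold qb) (tet_fold c) = hex_norm (qb - qc)"
    by (rule tet_dist_fold_nearest)
  have "tet_dist (tet_fold a) (tet_fold c) \<le> hex_norm (a - qc)" using qc(1) by (rule tet_dist_fold_le)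
  also have "\<dots> \<le> hex_norm (a - qb) + hex_norm (qb - qc)" by (rule hex_norm_triangle)
  finally show ?thesis using qb qc by simp
qed

lemma tet_dist_commute: "x \<in> tet_surface \<Longrightarrow> y \<in> tet_surface \<Longrightarrow> tet_dist x y = tet_dist y x"
  unfolding tet_surface_eq_range by (auto intro: tet_dist_fold_commute)

lemma tet_dist_triangle:
  "x \<in> tet_surface \<Longrightarrow> y \<in> tet_surface \<Longrightarrow> z \<in> tet_surface \<Longrightarrow> tet_dist x z \<le> tet_dist x y + tet_dist y z"
  unfolding tet_surface_eq_range by (auto intro: tet_dist_fold_triangle)


section \<open>Minimal geodesics\<close>

lemma min_geodesic_split:
  assumes "min_geodesic X d x y c" "t \<in> {0..1}"
  shows "d x (c t) + d (c t) y \<le> d x y"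
proof -
  have "ereal (chain_sum d c [0, t, 1]) \<le> path_len d c"
    by (rule chain_sum_le_path_len) (use assms(2) in auto)
  moreover have "path_len d c = ereal (d x y)" "c 0 = x" "c 1 = y"
    using assms(1) by (simp_all add: min_geodesic_def)
  ultimately show ?thesis by simp
qed

lemma hex_norm_eq_add_imp_segment:
  assumes "hex_norm (a - w) + hex_norm (w - q) = hex_norm (a - q)"
  obtains l where "0 \<le> l" "l \<le> 1" "w = (1 - l) *\<^sub>R a + l *\<^sub>R q"
proof -
  have "dist (hex_embed a) (hex_embed q) = dist (hex_embed a) (hex_embed w) + dist (hex_embed w) (hex_embed q)"
    using assms by (simp add: hex_norm_eq_norm_embed hex_embed_diff dist_norm)
  hence "between (hex_embed a, hex_embed q) (hex_embed w)" by (simp add: between)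
  hence "hex_embed w \<in> closed_segment (hex_embed a) (hex_embed q)" by (simp add: between_mem_segment)
  then obtain l where l: "0 \<le> l" "l \<le> 1" "hex_embed w = (1 - l) *\<^sub>R hex_embed a + l *\<^sub>R hex_embed q"
    unfolding in_segment by blast
  hence "hex_embed w = hex_embed ((1 - l) *\<^sub>R a + l *\<^sub>R q)" by (simp add: hex_embed_add hex_embed_scaleR)
  hence "w = (1 - l) *\<^sub>R a + l *\<^sub>R q" by (simp only: hex_embed_inject)
  thus ?thesis by (rule that[OF l(1,2)])
qed

lemma min_geodesic_point_on_segment:
  assumes c: "min_geodesic tet_surface tet_dist (tet_fold a) (tet_fold b) c" and t: "t \<in> {0..1}"
  obtains q l where "tet_fold q = tet_fold b" "hex_norm (a - q) = tet_dist (tet_fold a) (tet_fold b)"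
    "0 \<le> l" "l \<le> 1" "c t = tet_fold ((1 - l) *\<^sub>R a + l *\<^sub>R q)"
    "tet_dist (tet_fold a) (c t) = l * tet_dist (tet_fold a) (tet_fold b)"
proof -
  have "c t \<in> tet_surface" using c t by (auto simp: min_geodesic_def mpath_def)
  then obtain z where z: "c t = tet_fold z" unfolding tet_surface_eq_range by blast
  obtain w where w: "tet_fold w = tet_fold z" "tet_dist (tet_fold a) (tet_fold z) = hex_norm (a - w)"
    by (rule tet_dist_fold_nearest)
  obtain q where q: "tet_fold q = tet_fold b" "tet_dist (tet_fold w) (tet_fold b) = hex_norm (w - q)"
    by (rule tet_dist_fold_nearest)
  have "tet_dist (tet_fold a) (tet_fold z) + tet_dist (tet_fold z) (tet_fold b)
      \<le> tet_dist (tet_fold a) (tet_fold b)"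
    using min_geodesic_split[OF c t] z by simp
  moreover have "tet_dist (tet_fold a) (tet_fold b) \<le> hex_norm (a - q)"
    using q(1) by (rule tet_dist_fold_le)
  moreover have "hex_norm (a - q) \<le> hex_norm (a - w) + hex_norm (w - q)" by (rule hex_norm_triangle)
  ultimately have eq: "hex_norm (a - q) = tet_dist (tet_fold a) (tet_fold b)"
    "hex_norm (a - w) + hex_norm (w - q) = hex_norm (a - q)"
    using w q by simp_all
  obtain l where l: "0 \<le> l" "l \<le> 1" "w = (1 - l) *\<^sub>R a + l *\<^sub>R q"
    using hex_norm_eq_add_imp_segment[OF eq(2)] by blast
  have "a - w = l *\<^sub>R (a - q)" using l(3) by (simp add: algebra_simps)
  hence "tet_dist (tet_fold a) (c t) = l * tet_dist (tet_fold a) (tet_fold b)"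
    using z w eq l by (simp add: hex_norm_scaleR)
  thus ?thesis using that q(1) eq(1) l z w(1) by simp
qed

lemma min_geodesic_through_midpoint:
  assumes c: "min_geodesic tet_surface tet_dist (tet_fold a) (tet_fold b) c"
    and pos: "0 < tet_dist (tet_fold a) (tet_fold b)"
  obtains t q where "t \<in> {0..1}" "tet_fold q = tet_fold b"
    "hex_norm (a - q) = tet_dist (tet_fold a) (tet_fold b)" "c t = tet_fold ((1/2) *\<^sub>R (a + q))"
proof -
  let ?D = "tet_dist (tet_fold a) (tet_fold b)"
  define h where "h t = tet_dist (tet_fold a) (c t)" for t
  have cT: "c s \<in> tet_surface" if "s \<in> {0..1}" for s using c that by (auto simp: min_geodesic_def mpath_def)
  have aT: "tet_fold a \<in> tet_surface" by (simp add: tet_surface_eq_range)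
  have "continuous_on {0..1} h"
  proof (rule continuous_on_iff[THEN iffD2], intro ballI allI impI)
    fix t e assume t: "t \<in> {0..1::real}" and e: "(0::real) < e"
    obtain d where d: "d > 0" "\<forall>s\<in>{0..1}. \<bar>s - t\<bar> < d \<longrightarrow> tet_dist (c s) (c t) < e"
      using c t e unfolding min_geodesic_def mpath_def by blast
    have "dist (h s) (h t) < e" if "s \<in> {0..1}" "dist s t < d" for s
      using d(2) that tet_dist_triangle[OF aT cT[OF t] cT[OF that(1)]]
        tet_dist_triangle[OF aT cT[OF that(1)] cT[OF t]] tet_dist_commute[OF cT[OF t] cT[OF that(1)]]
      unfolding h_def by (fastforce simp: dist_real_def abs_if)
    thus "\<exists>d>0. \<forall>s\<in>{0..1}. dist s t < d \<longrightarrow> dist (h s) (h t) < e" using d(1) by blast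
  qed
  moreover have "h 0 = 0" "h 1 = ?D" using c by (auto simp: h_def min_geodesic_def tet_dist_fold_self)
  ultimately obtain t where t: "t \<in> {0..1}" "h t = ?D / 2"
    using IVT'[of h 0 "?D / 2" 1] pos by auto
  obtain q l where ql: "tet_fold q = tet_fold b" "hex_norm (a - q) = ?D" "0 \<le> l" "l \<le> 1"
    "c t = tet_fold ((1 - l) *\<^sub>R a + l *\<^sub>R q)" "tet_dist (tet_fold a) (c t) = l * ?D"
    using min_geodesic_point_on_segment[OF c t(1)] by blast
  have l: "l = 1/2" using ql(6) t(2) pos unfolding h_def by (simp add: field_simps)
  have "c t = tet_fold ((1/2) *\<^sub>R (a + q))" using ql(5) unfolding l by (simp add: scaleR_add_right)
  with that t(1) ql(1,2) show ?thesis by blast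
qed


section \<open>A pair of points with four shortest geodesics\<close>

lemma hex_form_lattice_far:
  assumes "\<not> (i \<in> {\<lfloor>w1 / 2\<rfloor>, \<lfloor>w1 / 2\<rfloor> + 1} \<and> j \<in> {\<lfloor>w2 / 2\<rfloor>, \<lfloor>w2 / 2\<rfloor> + 1})"
  shows "3 \<le> hex_form (w1 - 2 * of_int i, w2 - 2 * of_int j)"
proof -
  have far: "2 \<le> \<bar>w - 2 * of_int k\<bar>" if "k \<notin> {\<lfloor>w / 2\<rfloor>, \<lfloor>w / 2\<rfloor> + 1}" for w :: real and k
  proof -
    have "of_int \<lfloor>w / 2\<rfloor> \<le> w / 2" "w / 2 < of_int \<lfloor>w / 2\<rfloor> + 1" by linarith+
    moreover have "k < \<lfloor>w / 2\<rfloor> \<or> \<lfloor>w / 2\<rfloor> + 1 < k" using that by auto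
    hence "of_int k \<le> of_int \<lfloor>w / 2\<rfloor> - (1::real) \<or> of_int \<lfloor>w / 2\<rfloor> + 2 \<le> (of_int k :: real)"
      by linarith
    ultimately show ?thesis by linarith
  qed
  have sq: "4 \<le> v\<^sup>2" if "2 \<le> \<bar>v\<bar>" for v :: real
    using power_mono[OF that, of 2] by simp
  have "4 \<le> (w1 - 2 * of_int i)\<^sup>2 \<or> 4 \<le> (w2 - 2 * of_int j)\<^sup>2"
    using assms far[of i w1] far[of j w2] sq by blast
  thus ?thesis using hex_form_ge_fst[of "(w1 - 2 * of_int i, w2 - 2 * of_int j)"]
      hex_form_ge_snd[of "(w1 - 2 * of_int i, w2 - 2 * of_int j)"] by auto
qed

definition base_x :: pt where "base_x = (4/5, 1)"
definition base_y :: pt where "base_y = (2/5, 1/5)"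

text \<open>The four lifts of y that are nearest to x when (x, y) is close to (base_x, base_y);
  for the base pair itself all four are at the same distance.\<close>

definition cand_sign :: "nat \<Rightarrow> real" where
  "cand_sign k = (if k = 2 \<or> k = 3 then -1 else 1)"

definition cand_lift :: "nat \<Rightarrow> pt \<Rightarrow> pt" where
  "cand_lift k = deck (cand_sign k) (if k = 3 then 1 else 0) (if k = 1 \<or> k = 2 then 1 else 0)"

lemma cand_sign_cases: "cand_sign k = 1 \<or> cand_sign k = -1"
  by (simp add: cand_sign_def)

lemma tet_fold_cand_lift [simp]: "tet_fold (cand_lift k y) = tet_fold y"
  unfolding cand_lift_def using cand_sign_cases by (rule tet_fold_deck)

lemma hex_norm_cand_lift_diff: "hex_norm (cand_lift k y - cand_lift k y') = hex_norm (y - y')"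
  unfolding cand_lift_def using cand_sign_cases by (rule hex_norm_deck_diff)

lemma cand_lift_simps:
  "cand_lift 1 y = (fst y, snd y + 2)" "cand_lift (Suc 0) y = (fst y, snd y + 2)"
  "cand_lift 2 y = (- fst y, 2 - snd y)" "cand_lift 3 y = (2 - fst y, - snd y)" "cand_lift 4 y = y"
  by (simp_all add: cand_lift_def cand_sign_def deck_def)

lemma base_cand_form: "k \<in> {1,2,3,4} \<Longrightarrow> hex_form (base_x - cand_lift k base_y) = 28/25"
  by (auto simp: cand_lift_simps base_x_def base_y_def hex_form_def power2_eq_square)

lemma base_lift_cases:
  assumes "e = 1 \<or> e = -1"
  shows "(\<exists>k\<in>{1,2,3,4}. deck e i j = cand_lift k) \<or> 48/25 \<le> hex_form (base_x - deck e i j base_y)"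
proof -
  have cands: "cand_lift (Suc 0) = deck 1 0 1" "cand_lift 2 = deck (-1) 0 1" "cand_lift 3 = deck (-1) 1 0"
      "cand_lift 4 = deck 1 0 0"
    by (simp_all add: cand_lift_def cand_sign_def)
  define w where "w = base_x - e *\<^sub>R base_y"
  have eq: "base_x - deck e i j base_y = (fst w - 2 * of_int i, snd w - 2 * of_int j)"
    by (simp add: w_def deck_def prod_eq_iff)
  show ?thesis
  proof (cases "i \<in> {\<lfloor>fst w / 2\<rfloor>, \<lfloor>fst w / 2\<rfloor> + 1} \<and> j \<in> {\<lfloor>snd w / 2\<rfloor>, \<lfloor>snd w / 2\<rfloor> + 1}")
    case True
    thus ?thesis using assms unfolding eq
      by (auto simp: w_def base_x_def base_y_def cands hex_form_def power2_eq_square)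
  next
    case False
    thus ?thesis unfolding eq using hex_form_lattice_far[OF False] by simp
  qed
qed

definition mid :: "nat \<Rightarrow> pt" where
  "mid k = (1/2) *\<^sub>R (base_x + cand_lift k base_y)"

lemma tet_dist_mid_ge:
  assumes "k \<in> {1,2,3,4}" "k' \<in> {1,2,3,4}" "k \<noteq> k'"
  shows "1/2 \<le> tet_dist (tet_fold (mid k)) (tet_fold (mid k'))"
proof (rule tet_dist_fold_ge)
  fix q assume "tet_fold q = tet_fold (mid k')"
  then obtain e i j where e: "e = 1 \<or> e = -1" and q: "q = deck e i j (mid k')" by (rule tet_fold_eqE)
  define w where "w = mid k - e *\<^sub>R mid k'"
  have eq: "mid k - q = (fst w - 2 * of_int i, snd w - 2 * of_int j)"
    by (simp add: q w_def deck_def prod_eq_iff)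
  have "1/25 \<le> hex_form (mid k - q)"
  proof (cases "i \<in> {\<lfloor>fst w / 2\<rfloor>, \<lfloor>fst w / 2\<rfloor> + 1} \<and> j \<in> {\<lfloor>snd w / 2\<rfloor>, \<lfloor>snd w / 2\<rfloor> + 1}")
    case True
    thus ?thesis using assms e unfolding eq
      by (auto simp: w_def mid_def base_x_def base_y_def cand_lift_simps hex_form_def power2_eq_square)
  next
    case False
    thus ?thesis unfolding eq using hex_form_lattice_far[OF False] by simp
  qed
  hence "(1/2)\<^sup>2 \<le> 8 * hex_form (mid k - q)" by (simp add: power2_eq_square)
  thus "1/2 \<le> hex_norm (mid k - q)" unfolding hex_norm_def by (rule real_le_rsqrt)
qed


section \<open>Pairs near the base pair\<close>

definition near_base :: "pt \<Rightarrow> pt \<Rightarrow> bool" where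
  "near_base x y \<longleftrightarrow> hex_norm (x - base_x) < 1/100 \<and> hex_norm (y - base_y) < 1/100"

lemma near_base_base: "near_base base_x base_y"
  by (simp add: near_base_def)

lemma near_baseD:
  "near_base x y \<Longrightarrow> hex_norm (x - base_x) < 1/100"
  "near_base x y \<Longrightarrow> hex_norm (y - base_y) < 1/100"
  by (simp_all add: near_base_def)

definition base_dist :: real where
  "base_dist = sqrt (224/25)"

lemma base_dist_bounds: "29/10 \<le> base_dist" "base_dist \<le> 3"
  unfolding base_dist_def by (rule real_le_rsqrt real_le_lsqrt; simp add: power2_eq_square)+

lemma hex_norm_base_cand: "k \<in> {1,2,3,4} \<Longrightarrow> hex_norm (base_x - cand_lift k base_y) = base_dist"
  by (simp add: hex_norm_def base_cand_form base_dist_def)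

lemma near_cand_bounds:
  assumes "near_base x y" "k \<in> {1,2,3,4}"
  shows "base_dist - 2/100 \<le> hex_norm (x - cand_lift k y)" "hex_norm (x - cand_lift k y) \<le> base_dist + 2/100"
  using hex_norm_isometry_perturb[where L = "cand_lift k" and x = x and y = y and xb = base_x and yb = base_y,
      OF hex_norm_cand_lift_diff] assms
    hex_norm_base_cand[OF assms(2)] unfolding near_base_def by (simp_all add: abs_le_iff)

lemma near_lift_cases:
  assumes "near_base x y" "tet_fold q = tet_fold y"
  shows "(\<exists>k\<in>{1,2,3,4}. q = cand_lift k y) \<or> 388/100 \<le> hex_norm (x - q)"
proof -
  obtain e i j where e: "e = 1 \<or> e = -1" and q: "q = deck e i j y" using assms(2) by (rule tet_fold_eqE)
  from base_lift_cases[OF e, of i j] show ?thesis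
  proof
    assume "48/25 \<le> hex_form (base_x - deck e i j base_y)"
    hence "39/10 \<le> hex_norm (base_x - deck e i j base_y)"
      unfolding hex_norm_def by (intro real_le_rsqrt) (simp add: power2_eq_square)
    moreover have "hex_norm (base_x - deck e i j base_y) - hex_norm (x - q)
        \<le> hex_norm (x - base_x) + hex_norm (y - base_y)"
      using abs_le_D2[OF hex_norm_isometry_perturb[where L = "deck e i j" and x = x and y = y
          and xb = base_x and yb = base_y, OF hex_norm_deck_diff[OF e]]] q by simp
    ultimately have "388/100 \<le> hex_norm (x - q)" using assms(1) unfolding near_base_def by linarith
    thus ?thesis ..
  qed (auto simp: q)
qed

definition cand_form :: "nat \<Rightarrow> pt \<Rightarrow> pt \<Rightarrow> real" where
  "cand_form k x y = hex_form (x - cand_lift k y)"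

definition min_lifts :: "pt \<Rightarrow> pt \<Rightarrow> nat set" where
  "min_lifts x y = {k \<in> {1,2,3,4}. \<forall>k'\<in>{1,2,3,4}. cand_form k x y \<le> cand_form k' x y}"

lemma min_lifts_subset: "min_lifts x y \<subseteq> {1,2,3,4}"
  by (auto simp: min_lifts_def)

lemma min_lifts_le: "k \<in> min_lifts x y \<Longrightarrow> k' \<in> {1,2,3,4} \<Longrightarrow> cand_form k x y \<le> cand_form k' x y"
  by (auto simp: min_lifts_def)

lemma min_lifts_eq:
  assumes "k \<in> min_lifts x y" "k' \<in> min_lifts x y"
  shows "cand_form k x y = cand_form k' x y"
proof -
  have "k \<in> {1,2,3,4}" "k' \<in> {1,2,3,4}" using assms min_lifts_subset by blast+
  thus ?thesis using min_lifts_le[OF assms(1)] min_lifts_le[OF assms(2)] by fastforce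
qed

lemma not_in_min_lifts:
  assumes "k \<in> {1,2,3,4}" "k \<notin> min_lifts x y" "b \<in> min_lifts x y"
  shows "cand_form b x y < cand_form k x y"
proof (rule ccontr)
  assume "\<not> cand_form b x y < cand_form k x y"
  hence "cand_form k x y \<le> cand_form k' x y" if "k' \<in> {1,2,3,4}" for k'
    using min_lifts_le[OF assms(3) that] by linarith
  hence "k \<in> min_lifts x y" using assms(1) unfolding min_lifts_def by blast
  thus False using assms(2) by blast
qed

lemma min_lifts_eqI:
  assumes S: "S \<subseteq> {1,2,3,4}" "s \<in> S" and eq: "\<And>k. k \<in> S \<Longrightarrow> cand_form k x y = v"
    and gt: "\<And>k. k \<in> {1,2,3,4} \<Longrightarrow> k \<notin> S \<Longrightarrow> v < cand_form k x y"
  shows "min_lifts x y = S"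
proof (intro set_eqI iffI)
  fix k assume k: "k \<in> min_lifts x y"
  show "k \<in> S"
  proof (rule ccontr)
    assume "k \<notin> S"
    hence "v < cand_form k x y" using gt k min_lifts_subset by blast
    moreover have "cand_form k x y \<le> cand_form s x y" using min_lifts_le[OF k] S by blast
    ultimately show False using eq[OF S(2)] by linarith
  qed
next
  fix k assume k: "k \<in> S"
  have "cand_form k x y \<le> cand_form k' x y" if "k' \<in> {1,2,3,4}" for k'
    using eq[OF k] eq[of k'] gt[OF that] by (cases "k' \<in> S") force+
  thus "k \<in> min_lifts x y" using k S(1) unfolding min_lifts_def by blast
qed

lemma near_base_tet_dist:
  assumes "near_base x y" "k \<in> min_lifts x y"
  shows "tet_dist (tet_fold x) (tet_fold y) = hex_norm (x - cand_lift k y)"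
proof (rule antisym)
  show "tet_dist (tet_fold x) (tet_fold y) \<le> hex_norm (x - cand_lift k y)"
    by (rule tet_dist_fold_le) simp
  show "hex_norm (x - cand_lift k y) \<le> tet_dist (tet_fold x) (tet_fold y)"
  proof (rule tet_dist_fold_ge)
    fix q assume "tet_fold q = tet_fold y"
    from near_lift_cases[OF assms(1) this] show "hex_norm (x - cand_lift k y) \<le> hex_norm (x - q)"
    proof
      assume "388/100 \<le> hex_norm (x - q)"
      have "k \<in> {1,2,3,4}" using assms(2) min_lifts_subset by blast
      thus ?thesis using \<open>388/100 \<le> hex_norm (x - q)\<close> near_cand_bounds[OF assms(1)] base_dist_bounds
        by force
    qed (use min_lifts_le[OF assms(2)] in \<open>auto simp: cand_form_def hex_norm_le_iff\<close>)
  qed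
qed

lemma near_base_nearest_lift:
  assumes "near_base x y" "tet_fold q = tet_fold y" "hex_norm (x - q) = tet_dist (tet_fold x) (tet_fold y)"
  obtains k where "k \<in> min_lifts x y" "q = cand_lift k y"
proof -
  have le: "hex_norm (x - q) \<le> hex_norm (x - cand_lift k y)" for k
    using assms(3) tet_dist_fold_le[of "cand_lift k y" y x] by simp
  from near_lift_cases[OF assms(1,2)] show ?thesis
  proof
    assume "\<exists>k\<in>{1,2,3,4}. q = cand_lift k y"
    then obtain k where "k \<in> {1,2,3,4}" "q = cand_lift k y" by blast
    moreover have "k \<in> min_lifts x y"
      using calculation le by (auto simp: min_lifts_def cand_form_def hex_norm_le_iff)
    ultimately show ?thesis using that by blast
  next
    assume "388/100 \<le> hex_norm (x - q)"
    thus ?thesis using le[of 1] near_cand_bounds[OF assms(1), of 1] base_dist_bounds by simp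
  qed
qed

lemma near_base_tet_dist_bounds:
  assumes "near_base x y"
  shows "base_dist - 2/100 \<le> tet_dist (tet_fold x) (tet_fold y)"
    "tet_dist (tet_fold x) (tet_fold y) \<le> base_dist + 2/100"
proof -
  obtain q where q: "tet_fold q = tet_fold y" "tet_dist (tet_fold x) (tet_fold y) = hex_norm (x - q)"
    by (rule tet_dist_fold_nearest)
  then obtain k where k: "k \<in> min_lifts x y" "q = cand_lift k y"
    using near_base_nearest_lift[OF assms] by metis
  hence "k \<in> {1,2,3,4}" using min_lifts_subset by blast
  thus "base_dist - 2/100 \<le> tet_dist (tet_fold x) (tet_fold y)"
    "tet_dist (tet_fold x) (tet_fold y) \<le> base_dist + 2/100"
    using q k near_cand_bounds[OF assms] by simp_all
qed


section \<open>A motion-planning rule cannot switch between nearest lifts\<close>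

definition pair_dist :: "pt \<Rightarrow> pt \<Rightarrow> pt \<Rightarrow> pt \<Rightarrow> real" where
  "pair_dist x y x' y' = max (tet_dist (tet_fold x) (tet_fold x')) (tet_dist (tet_fold y) (tet_fold y'))"

lemma near_base_tet_dist_fst:
  assumes "near_base x1 y1" "near_base x2 y2"
  shows "tet_dist (tet_fold x1) (tet_fold x2) < 2/100"
  using tet_dist_fold_le_hex_norm[of x1 x2] hex_norm_triangle[where a = x1 and b = base_x and c = x2]
    near_baseD[OF assms(1)] near_baseD[OF assms(2)] hex_norm_minus_commute[of base_x x2] by linarith

lemma tet_dist_mid_near_midpoint:
  assumes "near_base x y" "k \<in> {1,2,3,4}"
  shows "tet_dist (tet_fold (mid k)) (tet_fold ((1/2) *\<^sub>R (x + cand_lift k y))) \<le> 1/100"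
proof -
  let ?m = "(1/2) *\<^sub>R (x + cand_lift k y)"
  have "mid k - ?m = (1/2) *\<^sub>R ((base_x - x) + (cand_lift k base_y - cand_lift k y))"
    by (simp add: mid_def algebra_simps)
  hence "2 * hex_norm (mid k - ?m) \<le> hex_norm (base_x - x) + hex_norm (base_y - y)"
    using hex_norm_add_le[of "base_x - x" "cand_lift k base_y - cand_lift k y"]
    by (simp add: hex_norm_scaleR hex_norm_cand_lift_diff)
  thus ?thesis using tet_dist_fold_le_hex_norm[of "mid k" ?m] near_baseD[OF assms(1)]
      hex_norm_minus_commute[of base_x x] hex_norm_minus_commute[of base_y y] by linarith
qed

lemma hex_norm_segment_midpoint:
  "hex_norm ((1 - l) *\<^sub>R x + l *\<^sub>R q - (1/2) *\<^sub>R (x + q)) = \<bar>l * hex_norm (x - q) - hex_norm (x - q) / 2\<bar>"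
proof -
  have "(1 - l) *\<^sub>R x + l *\<^sub>R q - (1/2) *\<^sub>R (x + q) = (1/2 - l) *\<^sub>R (x - q)"
    by (simp add: algebra_simps half_scaleR_add_self)
  moreover have "\<bar>1/2 - l\<bar> * hex_norm (x - q) = \<bar>(1/2 - l) * hex_norm (x - q)\<bar>"
    using hex_norm_nonneg[of "x - q"] by (simp add: abs_mult)
  moreover have "(1/2 - l) * hex_norm (x - q) = - (l * hex_norm (x - q) - hex_norm (x - q) / 2)"
    by (simp add: algebra_simps)
  ultimately show ?thesis by (simp add: hex_norm_scaleR)
qed

lemma pair_dist_self: "pair_dist x y x y = 0"
  by (simp add: pair_dist_def tet_dist_fold_self)

lemma pair_dist_triangle: "pair_dist x y x'' y'' \<le> pair_dist x y x' y' + pair_dist x' y' x'' y''"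
  using tet_dist_fold_triangle[where a = x and b = x' and c = x''] tet_dist_fold_triangle[where a = y and b = y' and c = y'']
  by (auto simp: pair_dist_def)

lemma pair_dist_le_hex_norm: "pair_dist x y x' y' \<le> max (hex_norm (x - x')) (hex_norm (y - y'))"
  using tet_dist_fold_le_hex_norm[of x x'] tet_dist_fold_le_hex_norm[of y y']
  by (auto simp: pair_dist_def)

lemma near_base_midpoint_dist:
  assumes "near_base x y" "k \<in> min_lifts x y"
  shows "tet_dist (tet_fold x) (tet_fold ((1/2) *\<^sub>R (x + cand_lift k y)))
    = tet_dist (tet_fold x) (tet_fold y) / 2"
proof -
  let ?m = "(1/2) *\<^sub>R (x + cand_lift k y)"
  let ?D = "tet_dist (tet_fold x) (tet_fold y)"
  have D: "?D = hex_norm (x - cand_lift k y)" by (rule near_base_tet_dist[OF assms])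
  have "x - ?m = (1/2) *\<^sub>R (x - cand_lift k y)" "?m - cand_lift k y = (1/2) *\<^sub>R (x - cand_lift k y)"
    by (simp_all add: algebra_simps half_scaleR_add_self)
  hence "tet_dist (tet_fold x) (tet_fold ?m) \<le> ?D / 2" "tet_dist (tet_fold ?m) (tet_fold y) \<le> ?D / 2"
    using tet_dist_fold_le_hex_norm[of x ?m] tet_dist_fold_le[of "cand_lift k y" y ?m] D
    by (simp_all add: hex_norm_scaleR)
  moreover have "?D \<le> tet_dist (tet_fold x) (tet_fold ?m) + tet_dist (tet_fold ?m) (tet_fold y)"
    by (rule tet_dist_fold_triangle)
  ultimately show ?thesis by linarith
qed

text \<open>A shortest geodesic of a near pair runs, up to small errors, through the midpoint for one
  of its own minimal lifts; as the four midpoints are far apart, it stays away from the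
  midpoints for the other lifts.\<close>

lemma min_geodesic_far_from_midpoint:
  assumes n1: "near_base x1 y1" and n2: "near_base x2 y2"
    and k: "k \<in> min_lifts x1 y1" and nk: "k \<notin> min_lifts x2 y2"
    and c: "min_geodesic tet_surface tet_dist (tet_fold x2) (tet_fold y2) c" and t: "t \<in> {0..1}"
  shows "1/10 \<le> tet_dist (tet_fold ((1/2) *\<^sub>R (x1 + cand_lift k y1))) (c t)"
proof (rule ccontr)
  define m1 where "m1 = (1/2) *\<^sub>R (x1 + cand_lift k y1)"
  define D1 where "D1 = tet_dist (tet_fold x1) (tet_fold y1)"
  define D2 where "D2 = tet_dist (tet_fold x2) (tet_fold y2)"
  assume "\<not> 1/10 \<le> tet_dist (tet_fold ((1/2) *\<^sub>R (x1 + cand_lift k y1))) (c t)"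
  hence close: "tet_dist (tet_fold m1) (c t) < 1/10" by (simp add: m1_def)
  obtain q l where ql: "tet_fold q = tet_fold y2" "hex_norm (x2 - q) = D2"
    "c t = tet_fold ((1 - l) *\<^sub>R x2 + l *\<^sub>R q)" "tet_dist (tet_fold x2) (c t) = l * D2"
    using min_geodesic_point_on_segment[OF c t] unfolding D2_def by blast
  obtain k' where k': "k' \<in> min_lifts x2 y2" "q = cand_lift k' y2"
    using near_base_nearest_lift[OF n2 ql(1)] ql(2) D2_def by metis
  have "k \<in> {1,2,3,4}" "k' \<in> {1,2,3,4}" "k \<noteq> k'" using k k' nk min_lifts_subset by blast+
  define w where "w = (1 - l) *\<^sub>R x2 + l *\<^sub>R q"
  define m2 where "m2 = (1/2) *\<^sub>R (x2 + q)"
  have D: "base_dist - 2/100 \<le> D1" "D1 \<le> base_dist + 2/100" "base_dist - 2/100 \<le> D2" "D2 \<le> base_dist + 2/100"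
    using near_base_tet_dist_bounds[OF n1] near_base_tet_dist_bounds[OF n2] by (simp_all add: D1_def D2_def)
  have x1m1: "tet_dist (tet_fold x1) (tet_fold m1) = D1 / 2"
    unfolding m1_def D1_def by (rule near_base_midpoint_dist[OF n1 k])
  have x1x2: "tet_dist (tet_fold x1) (tet_fold x2) < 2/100" by (rule near_base_tet_dist_fst[OF n1 n2])
  \<comment> \<open>c t = w is close to m1, hence at about half the length from x2, hence close to m2\<close>
  have "l * D2 < D1 / 2 + 12/100" "D1 / 2 - 12/100 < l * D2"
    using tet_dist_fold_triangle[where a = x2 and b = x1 and c = m1]
      tet_dist_fold_triangle[where a = x1 and b = x2 and c = m1]
      tet_dist_fold_triangle[where a = x2 and b = m1 and c = w]
      tet_dist_fold_triangle[where a = x2 and b = w and c = m1]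
      tet_dist_fold_commute[of x2 x1] tet_dist_fold_commute[of w m1]
      x1m1 x1x2 close ql(4) unfolding ql(3) w_def[symmetric] by linarith+
  hence "\<bar>l * D2 - D2 / 2\<bar> < 15/100" using D by (intro abs_less_iff[THEN iffD2] conjI) linarith+
  hence "tet_dist (tet_fold w) (tet_fold m2) < 15/100"
    using tet_dist_fold_le_hex_norm[of w m2] hex_norm_segment_midpoint[of l x2 q, unfolded ql(2)]
    unfolding w_def m2_def by linarith
  hence "tet_dist (tet_fold (mid k)) (tet_fold (mid k')) < 1/2"
    using close tet_dist_mid_near_midpoint[OF n1 \<open>k \<in> {1,2,3,4}\<close>]
      tet_dist_mid_near_midpoint[OF n2 \<open>k' \<in> {1,2,3,4}\<close>] tet_dist_fold_commute[of "mid k'" m2]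
      tet_dist_fold_triangle[where a = "mid k" and b = m1 and c = w]
      tet_dist_fold_triangle[where a = "mid k" and b = w and c = m2]
      tet_dist_fold_triangle[where a = "mid k" and b = m2 and c = "mid k'"]
    unfolding ql(3) w_def[symmetric] m1_def[symmetric] m2_def k'(2)[symmetric] by linarith
  thus False using tet_dist_mid_ge[OF \<open>k \<in> {1,2,3,4}\<close> \<open>k' \<in> {1,2,3,4}\<close> \<open>k \<noteq> k'\<close>] by linarith
qed

lemma gmpr_locks_min_lift:
  assumes gm: "gmpr tet_surface tet_dist E \<phi>" and n: "near_base x y"
    and inE: "(tet_fold x, tet_fold y) \<in> E"
  obtains k \<delta> where "k \<in> min_lifts x y" "0 < \<delta>"
    "\<And>x' y'. near_base x' y' \<Longrightarrow> pair_dist x y x' y' < \<delta> \<Longrightarrow> (tet_fold x', tet_fold y') \<in> E \<Longrightarrow>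
      k \<in> min_lifts x' y'"
proof -
  have geo: "min_geodesic tet_surface tet_dist (tet_fold x') (tet_fold y') (\<phi> (tet_fold x', tet_fold y'))"
    if "(tet_fold x', tet_fold y') \<in> E" for x' y' using gm that unfolding gmpr_def by auto
  have "0 < tet_dist (tet_fold x) (tet_fold y)" using near_base_tet_dist_bounds[OF n] base_dist_bounds by linarith
  then obtain t q where tq: "t \<in> {0..1}" "tet_fold q = tet_fold y"
    "hex_norm (x - q) = tet_dist (tet_fold x) (tet_fold y)"
    "\<phi> (tet_fold x, tet_fold y) t = tet_fold ((1/2) *\<^sub>R (x + q))"
    using min_geodesic_through_midpoint[OF geo[OF inE]] by blast
  obtain k where k: "k \<in> min_lifts x y" "q = cand_lift k y" using near_base_nearest_lift[OF n tq(2,3)] .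
  obtain \<delta> where \<delta>: "0 < \<delta>" "\<And>p. p \<in> E \<Longrightarrow> max (tet_dist (tet_fold x) (fst p)) (tet_dist (tet_fold y) (snd p)) < \<delta> \<Longrightarrow>
      tet_dist (\<phi> (tet_fold x, tet_fold y) t) (\<phi> p t) < 1/10"
    using gm inE tq(1) unfolding gmpr_def by (metis fst_conv snd_conv zero_less_divide_1_iff zero_less_numeral)
  show ?thesis
  proof (rule that[OF k(1) \<delta>(1)])
    fix x' y' assume "near_base x' y'" "pair_dist x y x' y' < \<delta>" "(tet_fold x', tet_fold y') \<in> E"
    thus "k \<in> min_lifts x' y'"
      using \<delta>(2)[of "(tet_fold x', tet_fold y')"] tq(4) k(2)
        min_geodesic_far_from_midpoint[OF n _ k(1) _ geo tq(1)]
      unfolding pair_dist_def by fastforce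
  qed
qed


section \<open>Perturbing the set of minimal lifts\<close>

definition hex_inner :: "pt \<Rightarrow> pt \<Rightarrow> real" where
  "hex_inner v w = fst v * fst w + (fst v * snd w + snd v * fst w) / 2 + snd v * snd w"

definition hex_perp :: "pt \<Rightarrow> pt" where
  "hex_perp v = (fst v + 2 * snd v, - (2 * fst v + snd v))"

definition det2 :: "pt \<Rightarrow> pt \<Rightarrow> real" where
  "det2 v w = fst v * snd w - snd v * fst w"

lemma hex_form_scaleR: "hex_form (c *\<^sub>R v) = c\<^sup>2 * hex_form v"
  by (simp add: hex_form_def power2_eq_square algebra_simps)

lemma hex_form_diff_scaleR: "hex_form (v - r *\<^sub>R z) = hex_form v - 2 * r * hex_inner v z + r\<^sup>2 * hex_form z"
  by (simp add: hex_form_def hex_inner_def power2_eq_square algebra_simps)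

lemma hex_inner_self: "hex_inner v v = hex_form v"
  by (simp add: hex_inner_def hex_form_def power2_eq_square field_simps)

lemma hex_inner_hex_perp: "hex_inner w (hex_perp v) = 3/2 * det2 w v"
  by (simp add: hex_inner_def hex_perp_def det2_def field_simps)

lemma hex_inner_diff_left: "hex_inner (a - b) z = hex_inner a z - hex_inner b z"
  and hex_inner_scaleR_right: "hex_inner v (c *\<^sub>R z) = c * hex_inner v z"
  by (simp_all add: hex_inner_def field_simps)

lemma hex_form_level_not_collinear:
  assumes "\<alpha> \<noteq> \<beta>" "\<beta> \<noteq> \<gamma>" "\<alpha> \<noteq> \<gamma>" "hex_form \<alpha> = hex_form \<beta>" "hex_form \<gamma> = hex_form \<beta>"
  shows "det2 (\<beta> - \<alpha>) (\<gamma> - \<beta>) \<noteq> 0"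
proof
  assume det: "det2 (\<beta> - \<alpha>) (\<gamma> - \<beta>) = 0"
  define v where "v = \<gamma> - \<beta>"
  have "v \<noteq> 0" using assms(2) by (simp add: v_def)
  obtain s where s: "\<beta> - \<alpha> = s *\<^sub>R v"
  proof (cases "fst v = 0")
    case True
    hence "snd v \<noteq> 0" using \<open>v \<noteq> 0\<close> by (simp add: prod_eq_iff)
    hence "\<beta> - \<alpha> = (snd (\<beta> - \<alpha>) / snd v) *\<^sub>R v"
      using det True by (simp add: v_def[symmetric] det2_def prod_eq_iff)
    thus ?thesis by (rule that)
  next
    case False
    hence "\<beta> - \<alpha> = (fst (\<beta> - \<alpha>) / fst v) *\<^sub>R v"
      using det by (simp add: v_def[symmetric] det2_def prod_eq_iff field_simps)
    thus ?thesis by (rule that)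
  qed
  \<comment> \<open>along the line \<beta> + r v, hex_form is a quadratic in r taking the same value at r = -s, 0, 1\<close>
  have "hex_form \<gamma> = hex_form \<beta> + 2 * hex_inner \<beta> v + hex_form v"
    using hex_form_diff_scaleR[of \<beta> "-1" v] by (simp add: v_def)
  hence h1: "hex_form v + 2 * hex_inner \<beta> v = 0" using assms(5) by simp
  have "hex_form \<alpha> = hex_form \<beta> - 2 * s * hex_inner \<beta> v + s\<^sup>2 * hex_form v"
    using hex_form_diff_scaleR[of \<beta> s v] s by (simp add: algebra_simps)
  hence h2: "s\<^sup>2 * hex_form v - 2 * s * hex_inner \<beta> v = 0" using assms(4) by simp
  have "s * (1 + s) * hex_form v = s * (hex_form v + 2 * hex_inner \<beta> v) + (s\<^sup>2 * hex_form v - 2 * s * hex_inner \<beta> v)"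
    by (simp add: power2_eq_square algebra_simps)
  hence "s * (1 + s) * hex_form v = 0" unfolding h1 h2 by simp
  hence "s = 0 \<or> s = -1" using hex_form_pos[OF \<open>v \<noteq> 0\<close>] by auto
  thus False using s assms(1,3) by (auto simp: v_def algebra_simps)
qed

text \<open>The sign makes y enter lift_vec k x y with coefficient -1 for every k.\<close>

definition lift_vec :: "nat \<Rightarrow> pt \<Rightarrow> pt \<Rightarrow> pt" where
  "lift_vec k x y = cand_sign k *\<^sub>R (x - cand_lift k y)"

lemma cand_form_eq_lift_vec: "cand_form k x y = hex_form (lift_vec k x y)"
  using cand_sign_cases[of k] by (auto simp: cand_form_def lift_vec_def hex_form_scaleR)

lemma cand_form_shift_diff:
  "cand_form k x (y + r *\<^sub>R z) - cand_form c x (y + r *\<^sub>R z)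
    = cand_form k x y - cand_form c x y + 2 * r * hex_inner (lift_vec c x y - lift_vec k x y) z"
proof -
  have shift: "lift_vec k x (y + r *\<^sub>R z) = lift_vec k x y - r *\<^sub>R z" for k
    using cand_sign_cases[of k] by (auto simp: lift_vec_def cand_lift_def deck_def algebra_simps prod_eq_iff)
  show ?thesis unfolding cand_form_eq_lift_vec shift hex_form_diff_scaleR
    by (simp add: hex_inner_diff_left algebra_simps)
qed

lemma near_base_lift_vec_inj:
  assumes "near_base x y" "i \<in> {1,2,3,4}" "j \<in> {1,2,3,4}" "i \<noteq> j"
  shows "lift_vec i x y \<noteq> lift_vec j x y"
proof -
  have "\<bar>fst x - 4/5\<bar> < 1/100"
    using abs_fst_le_hex_norm[of "x - base_x"] assms(1) by (simp add: near_base_def base_x_def)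
  thus ?thesis using assms(2-4)
    by (auto simp: lift_vec_def cand_lift_simps cand_sign_def prod_eq_iff algebra_simps)
qed

lemma min_lifts_shift:
  assumes c: "c \<in> min_lifts x y" and b: "b \<in> min_lifts x y" "b \<noteq> c"
    and keep: "\<And>k. k \<in> min_lifts x y \<Longrightarrow> k \<noteq> b \<Longrightarrow> hex_inner (lift_vec c x y - lift_vec k x y) z = 0"
    and drop: "0 < hex_inner (lift_vec c x y - lift_vec b x y) z"
    and r: "0 < r" and others: "\<And>k. k \<in> {1,2,3,4} - min_lifts x y \<Longrightarrow>
      0 < cand_form k x y - cand_form c x y + 2 * r * hex_inner (lift_vec c x y - lift_vec k x y) z"
  shows "min_lifts x (y + r *\<^sub>R z) = min_lifts x y - {b}"
proof (rule min_lifts_eqI[where s = c and v = "cand_form c x (y + r *\<^sub>R z)"])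
  let ?M = "min_lifts x y"
  note diff = cand_form_shift_diff[of _ x y r z c]
  show "?M - {b} \<subseteq> {1,2,3,4}" "c \<in> ?M - {b}" using min_lifts_subset[of x y] c b by auto
  show "cand_form k x (y + r *\<^sub>R z) = cand_form c x (y + r *\<^sub>R z)" if "k \<in> ?M - {b}" for k
    using diff[of k] keep[of k] min_lifts_eq[OF _ c, of k] that by simp
  show "cand_form c x (y + r *\<^sub>R z) < cand_form k x (y + r *\<^sub>R z)" if "k \<in> {1,2,3,4}" "k \<notin> ?M - {b}" for k
  proof (cases "k = b")
    case True
    thus ?thesis using diff[of b] min_lifts_eq[OF b(1) c] mult_pos_pos[OF r drop] by simp
  qed (use diff[of k] others[of k] that in auto)
qed

lemma min_lifts_perturb:
  assumes n: "near_base x y" and c: "c \<in> min_lifts x y" and b: "b \<in> min_lifts x y" "b \<noteq> c"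
    and keep: "\<And>k. k \<in> min_lifts x y \<Longrightarrow> k \<noteq> b \<Longrightarrow> hex_inner (lift_vec c x y - lift_vec k x y) z = 0"
    and drop: "0 < hex_inner (lift_vec c x y - lift_vec b x y) z"
    and "0 < \<epsilon>"
  obtains y' where "near_base x y'" "min_lifts x y' = min_lifts x y - {b}" "hex_norm (y' - y) < \<epsilon>"
proof -
  let ?M = "min_lifts x y"
  define g where "g k r = cand_form k x y - cand_form c x y + 2 * r * hex_inner (lift_vec c x y - lift_vec k x y) z"
    for k r
  have "\<forall>\<^sub>F r in at_right 0. 0 < r \<and> hex_norm (y + r *\<^sub>R z - base_y) < 1/100 \<and> hex_norm (r *\<^sub>R z) < \<epsilon> \<and>
      (\<forall>k\<in>{1,2,3,4} - ?M. 0 < g k r)"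
  proof (intro eventually_conj eventually_ball_finite ballI)
    show "\<forall>\<^sub>F r in at_right 0. 0 < (r::real)" by (rule eventually_at_right_less)
    have "((\<lambda>r. hex_norm (y + r *\<^sub>R z - base_y)) \<longlongrightarrow> hex_norm (y + 0 *\<^sub>R z - base_y)) (at_right 0)"
      by (intro tendsto_intros)
    thus "\<forall>\<^sub>F r in at_right 0. hex_norm (y + r *\<^sub>R z - base_y) < 1/100"
      using n by (intro order_tendstoD(2)) (auto simp: near_base_def)
    have "((\<lambda>r. hex_norm (r *\<^sub>R z)) \<longlongrightarrow> hex_norm (0 *\<^sub>R z)) (at_right 0)" by (intro tendsto_intros)
    thus "\<forall>\<^sub>F r in at_right 0. hex_norm (r *\<^sub>R z) < \<epsilon>" using \<open>0 < \<epsilon>\<close> by (intro order_tendstoD(2)) auto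
    fix k assume "k \<in> {1,2,3,4} - ?M"
    hence "0 < g k 0" using not_in_min_lifts[OF _ _ c] by (simp add: g_def)
    moreover have "((g k) \<longlongrightarrow> g k 0) (at_right 0)" unfolding g_def by (intro tendsto_intros)
    ultimately show "\<forall>\<^sub>F r in at_right 0. 0 < g k r" by (intro order_tendstoD(1))
  qed simp
  then obtain r where r: "0 < r" "hex_norm (y + r *\<^sub>R z - base_y) < 1/100" "hex_norm (r *\<^sub>R z) < \<epsilon>"
    "\<And>k. k \<in> {1,2,3,4} - ?M \<Longrightarrow> 0 < g k r"
    using eventually_happens'[OF trivial_limit_at_right_real] by blast
  have "min_lifts x (y + r *\<^sub>R z) = ?M - {b}"
    using min_lifts_shift[OF c b keep drop r(1)] r(4) unfolding g_def by blast
  moreover have "near_base x (y + r *\<^sub>R z)" using n r(2) by (simp add: near_base_def)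
  ultimately show ?thesis using that r(3) by simp
qed

lemma min_lifts_drop_from_two:
  assumes n: "near_base x y" and b: "b \<in> min_lifts x y" and M: "min_lifts x y - {b} = {c}"
    and "0 < \<epsilon>"
  obtains y' where "near_base x y'" "min_lifts x y' = min_lifts x y - {b}" "hex_norm (y' - y) < \<epsilon>"
proof -
  have c: "c \<in> min_lifts x y" "c \<noteq> b" using M by auto
  \<comment> \<open>perturbing y along ?z makes the lift b strictly worse than c\<close>
  let ?z = "lift_vec c x y - lift_vec b x y"
  have "c \<in> {1,2,3,4}" "b \<in> {1,2,3,4}" using c b min_lifts_subset by blast+
  hence "?z \<noteq> 0" using near_base_lift_vec_inj[OF n _ _ c(2)] by simp
  show ?thesis
  proof (rule min_lifts_perturb[OF n c(1) b c(2)[symmetric] _ _ \<open>0 < \<epsilon>\<close>])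
    show "hex_inner (lift_vec c x y - lift_vec k x y) ?z = 0" if "k \<in> min_lifts x y" "k \<noteq> b" for k
    proof -
      have "k = c" using that M by blast
      thus ?thesis by (simp add: hex_inner_def)
    qed
    show "0 < hex_inner ?z ?z" using hex_form_pos[OF \<open>?z \<noteq> 0\<close>] by (simp add: hex_inner_self)
  qed (use that in blast)
qed

lemma min_lifts_drop_from_three:
  assumes n: "near_base x y" and b: "b \<in> min_lifts x y" and M: "min_lifts x y - {b} = {c, d}" "c \<noteq> d"
    and "0 < \<epsilon>"
  obtains y' where "near_base x y'" "min_lifts x y' = min_lifts x y - {b}" "hex_norm (y' - y) < \<epsilon>"
proof -
  have cd: "c \<in> min_lifts x y" "d \<in> min_lifts x y" "c \<noteq> b" "d \<noteq> b" using M by auto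
  define \<alpha> \<beta> \<gamma> where "\<alpha> = lift_vec b x y" "\<beta> = lift_vec c x y" "\<gamma> = lift_vec d x y"
  \<comment> \<open>move y perpendicularly (for hex_inner) to \<gamma> - \<beta>, towards the side away from \<alpha>\<close>
  have "det2 (\<beta> - \<alpha>) (\<gamma> - \<beta>) \<noteq> 0"
  proof (rule hex_form_level_not_collinear)
    have "b \<in> {1,2,3,4}" "c \<in> {1,2,3,4}" "d \<in> {1,2,3,4}" using cd b min_lifts_subset by blast+
    thus "\<alpha> \<noteq> \<beta>" "\<beta> \<noteq> \<gamma>" "\<alpha> \<noteq> \<gamma>"
      unfolding \<alpha>_\<beta>_\<gamma>_def using near_base_lift_vec_inj[OF n] cd(3,4) M(2) by metis+
    show "hex_form \<alpha> = hex_form \<beta>" "hex_form \<gamma> = hex_form \<beta>"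
      unfolding \<alpha>_\<beta>_\<gamma>_def using min_lifts_eq[OF b cd(1)] min_lifts_eq[OF cd(2,1)]
      by (simp_all add: cand_form_eq_lift_vec)
  qed
  define z where "z = sgn (det2 (\<beta> - \<alpha>) (\<gamma> - \<beta>)) *\<^sub>R hex_perp (\<gamma> - \<beta>)"
  show ?thesis
  proof (rule min_lifts_perturb[OF n cd(1) b cd(3)[symmetric] _ _ \<open>0 < \<epsilon>\<close>, of z])
    show "hex_inner (lift_vec c x y - lift_vec k x y) z = 0" if "k \<in> min_lifts x y" "k \<noteq> b" for k
    proof -
      have "k = c \<or> k = d" using that M by blast
      thus ?thesis
        by (auto simp: z_def \<alpha>_\<beta>_\<gamma>_def hex_inner_scaleR_right hex_inner_hex_perp det2_def algebra_simps)
    qed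
    show "0 < hex_inner (lift_vec c x y - lift_vec b x y) z"
      using \<open>det2 (\<beta> - \<alpha>) (\<gamma> - \<beta>) \<noteq> 0\<close>
      by (auto simp: z_def \<alpha>_\<beta>_\<gamma>_def[symmetric] hex_inner_scaleR_right hex_inner_hex_perp sgn_if)
  qed (use that in blast)
qed

lemma near_base_drop:
  assumes n: "near_base x y" and k: "k \<in> min_lifts x y"
    and card: "2 \<le> card (min_lifts x y)" "card (min_lifts x y) \<le> 3" and "0 < \<epsilon>"
  shows "\<exists>x' y'. near_base x' y' \<and> min_lifts x' y' = min_lifts x y - {k} \<and> pair_dist x y x' y' < \<epsilon>"
proof -
  have "finite (min_lifts x y)" using min_lifts_subset finite_subset by blast
  hence "card (min_lifts x y - {k}) = 1 \<or> card (min_lifts x y - {k}) = 2" using card k by auto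
  then obtain y' where y': "near_base x y'" "min_lifts x y' = min_lifts x y - {k}" "hex_norm (y' - y) < \<epsilon>"
    by (auto simp: card_1_singleton_iff card_2_iff
        elim: min_lifts_drop_from_two[OF n k _ \<open>0 < \<epsilon>\<close>] min_lifts_drop_from_three[OF n k _ _ \<open>0 < \<epsilon>\<close>])
  moreover have "pair_dist x y x y' \<le> hex_norm (y' - y)"
    using pair_dist_le_hex_norm[of x y x y'] hex_norm_minus_commute[of y y'] hex_norm_nonneg[of "y' - y"]
    by simp
  ultimately show ?thesis by (meson order.strict_trans1)
qed

text \<open>Moving the base pair along split_dir a increases (to first order) the distance to the
  a-th candidate lift, while the other three stay equal.\<close>

definition split_dir :: "nat \<Rightarrow> pt \<times> pt" where
  "split_dir a = (if a = 1 then ((2, -10), (-9, 3)) else if a = 2 then ((-1, 5), (27, -9))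
                  else if a = 3 then ((-8, 10), (6, 3)) else ((4, -5), (-18, -9)))"

lemma min_lifts_base: "min_lifts base_x base_y = {1,2,3,4}"
  by (rule min_lifts_eqI[where s = 1 and v = "28/25"]) (auto simp: cand_form_def base_cand_form)

lemma min_lifts_split_dir:
  assumes a: "a \<in> {1,2,3,4}" and t: "0 < t"
  shows "min_lifts (base_x + t *\<^sub>R fst (split_dir a)) (base_y + t *\<^sub>R snd (split_dir a)) = {1,2,3,4} - {a}"
proof -
  note defs = cand_form_def cand_lift_simps split_dir_def base_x_def base_y_def hex_form_def power2_eq_square
  from a consider "a = 1" | "a = 2" | "a = 3" | "a = 4" by auto
  thus ?thesis
  proof cases
    case 1
    show ?thesis unfolding 1
      by (rule min_lifts_eqI[where s = 2 and v = "28/25 - 42/5 * t + 147 * t\<^sup>2"])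
        (use t in \<open>auto simp: defs field_simps\<close>)
  next
    case 2
    show ?thesis unfolding 2
      by (rule min_lifts_eqI[where s = 1 and v = "28/25 - 84/5 * t + 588 * t\<^sup>2"])
        (use t in \<open>auto simp: defs field_simps\<close>)
  next
    case 3
    show ?thesis unfolding 3
      by (rule min_lifts_eqI[where s = 1 and v = "28/25 - 42/5 * t + 147 * t\<^sup>2"])
        (use t in \<open>auto simp: defs field_simps\<close>)
  next
    case 4
    show ?thesis unfolding 4
      by (rule min_lifts_eqI[where s = 1 and v = "28/25 - 84/5 * t + 588 * t\<^sup>2"])
        (use t in \<open>auto simp: defs field_simps\<close>)
  qed
qed

lemma base_drop:
  assumes "k \<in> min_lifts base_x base_y" "0 < \<epsilon>"
  shows "\<exists>x y. near_base x y \<and> min_lifts x y = min_lifts base_x base_y - {k} \<and> pair_dist base_x base_y x y < \<epsilon>"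
proof -
  obtain dx dy where d: "split_dir k = (dx, dy)" by (metis surj_pair)
  have "\<forall>\<^sub>F t in at_right 0. 0 < t \<and> hex_norm (t *\<^sub>R dx) < min \<epsilon> (1/100) \<and> hex_norm (t *\<^sub>R dy) < min \<epsilon> (1/100)"
  proof (intro eventually_conj)
    have lim: "((\<lambda>t. hex_norm (t *\<^sub>R d)) \<longlongrightarrow> hex_norm (0 *\<^sub>R d)) (at_right 0)" for d
      by (intro tendsto_intros)
    show "\<forall>\<^sub>F t in at_right 0. hex_norm (t *\<^sub>R dx) < min \<epsilon> (1/100)"
      "\<forall>\<^sub>F t in at_right 0. hex_norm (t *\<^sub>R dy) < min \<epsilon> (1/100)"
      by (rule order_tendstoD(2)[OF lim], simp add: \<open>0 < \<epsilon>\<close>)+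
  qed (rule eventually_at_right_less)
  then obtain t where t: "0 < t" "hex_norm (t *\<^sub>R dx) < min \<epsilon> (1/100)" "hex_norm (t *\<^sub>R dy) < min \<epsilon> (1/100)"
    using eventually_happens'[OF trivial_limit_at_right_real] by blast
  define x y where "x = base_x + t *\<^sub>R dx" "y = base_y + t *\<^sub>R dy"
  have "near_base x y" using t by (simp add: near_base_def x_y_def)
  moreover have "min_lifts x y = min_lifts base_x base_y - {k}"
    using min_lifts_split_dir[of k t] assms(1) t(1) d by (simp add: x_y_def min_lifts_base)
  moreover have "pair_dist base_x base_y x y \<le> max (hex_norm (t *\<^sub>R dx)) (hex_norm (t *\<^sub>R dy))"
    using pair_dist_le_hex_norm[of base_x base_y x y] hex_norm_minus_commute[of base_x x]
      hex_norm_minus_commute[of base_y y] by (simp add: x_y_def)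
  hence "pair_dist base_x base_y x y < \<epsilon>" using t(2,3) by linarith
  ultimately show ?thesis by blast
qed


section \<open>At least four sets are needed\<close>

definition excluded :: "('i \<Rightarrow> ((real^3) \<times> (real^3)) set) \<Rightarrow> 'i set \<Rightarrow> real \<Rightarrow> pt \<Rightarrow> pt \<Rightarrow> bool" where
  "excluded E J r x y \<longleftrightarrow> (\<forall>x' y'. near_base x' y' \<longrightarrow> pair_dist x y x' y' < r \<longrightarrow>
      min_lifts x' y' \<subseteq> min_lifts x y \<longrightarrow> (\<forall>j\<in>J. (tet_fold x', tet_fold y') \<notin> E j))"

lemma excludedD:
  "excluded E J r x y \<Longrightarrow> near_base x' y' \<Longrightarrow> pair_dist x y x' y' < r \<Longrightarrow>
    min_lifts x' y' \<subseteq> min_lifts x y \<Longrightarrow> j \<in> J \<Longrightarrow> (tet_fold x', tet_fold y') \<notin> E j"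
  unfolding excluded_def by blast

lemma covering_index:
  assumes cov: "tet_surface \<times> tet_surface \<subseteq> (\<Union>j\<in>I. E j)"
    and "near_base x y" "0 < r" "excluded E J r x y"
  obtains j where "j \<in> I - J" "(tet_fold x, tet_fold y) \<in> E j"
proof -
  obtain j where "j \<in> I" "(tet_fold x, tet_fold y) \<in> E j" using cov tet_fold_in_surface by blast
  moreover have "j \<notin> J"
    using excludedD[OF assms(4,2) _ order_refl] calculation(2) pair_dist_self[of x y] assms(3) by force
  ultimately show ?thesis using that by blast
qed

lemma excluded_step:
  assumes gm: "\<forall>j\<in>I. gmpr tet_surface tet_dist (E j) (\<phi> j)"
    and cov: "tet_surface \<times> tet_surface \<subseteq> (\<Union>j\<in>I. E j)"
    and n: "near_base x y" and r: "0 < r" and ex: "excluded E J r x y"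
    and drop: "\<And>k \<epsilon>. k \<in> min_lifts x y \<Longrightarrow> 0 < \<epsilon> \<Longrightarrow>
      \<exists>x' y'. near_base x' y' \<and> min_lifts x' y' = min_lifts x y - {k} \<and> pair_dist x y x' y' < \<epsilon>"
  obtains j x' y' r' where "j \<in> I - J" "near_base x' y'" "0 < r'"
    "card (min_lifts x' y') = card (min_lifts x y) - 1" "excluded E (insert j J) r' x' y'"
proof -
  obtain j where j: "j \<in> I - J" "(tet_fold x, tet_fold y) \<in> E j" using covering_index[OF cov n r ex] .
  obtain k \<delta> where k: "k \<in> min_lifts x y" and \<delta>: "0 < \<delta>" and lock: "\<And>x' y'. near_base x' y' \<Longrightarrow>
      pair_dist x y x' y' < \<delta> \<Longrightarrow> (tet_fold x', tet_fold y') \<in> E j \<Longrightarrow> k \<in> min_lifts x' y'"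
    using gmpr_locks_min_lift[OF gm[rule_format] n j(2)] j(1) by blast
  define \<epsilon> where "\<epsilon> = min r \<delta> / 2"
  have "0 < \<epsilon>" using r \<delta> by (simp add: \<epsilon>_def)
  then obtain x' y' where x'y': "near_base x' y'" "min_lifts x' y' = min_lifts x y - {k}" "pair_dist x y x' y' < \<epsilon>"
    using drop[OF k] by blast
  have "excluded E (insert j J) \<epsilon> x' y'"
    unfolding excluded_def
  proof (intro allI impI ballI)
    fix x'' y'' j' assume "near_base x'' y''" "pair_dist x' y' x'' y'' < \<epsilon>"
      "min_lifts x'' y'' \<subseteq> min_lifts x' y'" "j' \<in> insert j J"
    moreover have "pair_dist x y x'' y'' < min r \<delta>"
      using pair_dist_triangle[of x y x'' y'' x' y'] x'y'(3) calculation(2) by (simp add: \<epsilon>_def)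
    ultimately show "(tet_fold x'', tet_fold y'') \<notin> E j'"
      using excludedD[OF ex, of x'' y'' j'] lock[of x'' y''] x'y'(2) by auto
  qed
  moreover have "card (min_lifts x' y') = card (min_lifts x y) - 1"
    using x'y'(2) k finite_subset[OF min_lifts_subset] by simp
  ultimately show ?thesis using that j(1) x'y'(1) \<open>0 < \<epsilon>\<close> by blast
qed

theorem gmpr_cover_card_ge_4:
  assumes gm: "\<forall>j\<in>I. gmpr tet_surface tet_dist (E j) (\<phi> j)"
    and cov: "tet_surface \<times> tet_surface \<subseteq> (\<Union>j\<in>I. E j)" and "finite I"
  shows "4 \<le> card I"
proof -
  \<comment> \<open>starting from the base pair, drop one minimal lift at a time, each time excluding one more set\<close>
  have "excluded E {} 1 base_x base_y" by (simp add: excluded_def)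
  then obtain j1 x1 y1 r1 where 1: "j1 \<in> I - {}" "near_base x1 y1" "0 < r1"
      "card (min_lifts x1 y1) = card (min_lifts base_x base_y) - 1" "excluded E (insert j1 {}) r1 x1 y1"
    by (rule excluded_step[OF gm cov near_base_base zero_less_one _ base_drop])
  have c1: "2 \<le> card (min_lifts x1 y1)" "card (min_lifts x1 y1) \<le> 3" using 1(4) by (simp_all add: min_lifts_base)
  obtain j2 x2 y2 r2 where 2: "j2 \<in> I - {j1}" "near_base x2 y2" "0 < r2"
      "card (min_lifts x2 y2) = card (min_lifts x1 y1) - 1" "excluded E (insert j2 {j1}) r2 x2 y2"
    by (rule excluded_step[OF gm cov 1(2,3) 1(5)[simplified] near_base_drop[OF 1(2) _ c1]])
  have c2: "2 \<le> card (min_lifts x2 y2)" "card (min_lifts x2 y2) \<le> 3" using 2(4) 1(4) by (simp_all add: min_lifts_base)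
  obtain j3 x3 y3 r3 where 3: "j3 \<in> I - {j2, j1}" "near_base x3 y3" "0 < r3"
      "excluded E (insert j3 {j2, j1}) r3 x3 y3"
    by (rule excluded_step[OF gm cov 2(2,3,5) near_base_drop[OF 2(2) _ c2]])
  obtain j4 where "j4 \<in> I - {j3, j2, j1}" using covering_index[OF cov 3(2-4)] .
  hence "{j4, j3, j2, j1} \<subseteq> I" "card {j4, j3, j2, j1} = 4" using 1(1) 2(1) 3(1) by auto
  thus ?thesis using card_mono[OF \<open>finite I\<close>] by metis
qed

theorem theorem4p1:
  shows "\<not> (\<exists>E1 E2 E3 \<phi>1 \<phi>2 \<phi>3.
            E1 \<union> E2 \<union> E3 = tet_surface \<times> tet_surface \<and>
            E1 \<inter> E2 = {} \<and> E1 \<inter> E3 = {} \<and> E2 \<inter> E3 = {} \<and>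
            gmpr tet_surface tet_dist E1 \<phi>1 \<and>
            gmpr tet_surface tet_dist E2 \<phi>2 \<and>
            gmpr tet_surface tet_dist E3 \<phi>3)"
proof
  assume "\<exists>E1 E2 E3 \<phi>1 \<phi>2 \<phi>3.
            E1 \<union> E2 \<union> E3 = tet_surface \<times> tet_surface \<and>
            E1 \<inter> E2 = {} \<and> E1 \<inter> E3 = {} \<and> E2 \<inter> E3 = {} \<and>
            gmpr tet_surface tet_dist E1 \<phi>1 \<and>
            gmpr tet_surface tet_dist E2 \<phi>2 \<and>
            gmpr tet_surface tet_dist E3 \<phi>3"
  then obtain E1 E2 E3 \<phi>1 \<phi>2 \<phi>3 where cov: "E1 \<union> E2 \<union> E3 = tet_surface \<times> tet_surface"
    and gm: "gmpr tet_surface tet_dist E1 \<phi>1" "gmpr tet_surface tet_dist E2 \<phi>2" "gmpr tet_surface tet_dist E3 \<phi>3"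
    by blast
  define E where "E j = (if j = (1::nat) then E1 else if j = 2 then E2 else E3)" for j
  define \<phi> where "\<phi> j = (if j = (1::nat) then \<phi>1 else if j = 2 then \<phi>2 else \<phi>3)" for j
  have "4 \<le> card {1::nat, 2, 3}"
  proof (rule gmpr_cover_card_ge_4)
    show "\<forall>j\<in>{1,2,3}. gmpr tet_surface tet_dist (E j) (\<phi> j)" using gm by (simp add: E_def \<phi>_def)
    show "tet_surface \<times> tet_surface \<subseteq> (\<Union>j\<in>{1,2,3}. E j)" using cov by (auto simp: E_def)
  qed simp
  thus False by simp
qed

end
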